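(* Let $N\ge2$, $M=S^{N-1}\times S^{N-1}\times S^{N-1}$ with the product of Euclidean measures, and $h_\lambda(x,y,z)=|\langle y,z\rangle|^{\lambda_1}|\langle z,x\rangle|^{\lambda_2}|\langle x,y\rangle|^{\lambda_3}$ for $\lambda\in\mathbb{C}^3$. Then $\int_Mh_\lambda(x,y,z)\,d\sigma(x)d\sigma(y)d\sigma(z)$ converges absolutely if and only if $\operatorname{Re}\lambda_j>-1$ for $j=1,2,3$. *)

theory Defs
  imports "HOL-Analysis.Analysis"
begin

text \<open>Euclidean surface measure on the unit sphere S^{N-1} of R^N (N = CARD('n)),
  defined via the cone construction: sigma(A) = N * lebesgue({t x. x in A, 0 < t < 1}).\<close>

definition sphere_measure :: "(real ^ 'n) measure" where
  "sphere_measure =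
     density
       (distr (restrict_space lborel (ball 0 1 - {0}))
              (restrict_space borel (sphere 0 1))
              (\<lambda>y. (1 / norm y) *\<^sub>R y))
       (\<lambda>_. ennreal (real CARD('n)))"

text \<open>The kernel h_lambda(x,y,z) = |<y,z>|^l1 |<z,x>|^l2 |<x,y>|^l3 (complex powers;
  the value at a vanishing inner product is 0 by the convention 0 powr s = 0, a null set).\<close>

definition h_lambda :: "complex \<Rightarrow> complex \<Rightarrow> complex \<Rightarrow> real ^ 'n \<Rightarrow> real ^ 'n \<Rightarrow> real ^ 'n \<Rightarrow> complex" where
  "h_lambda l1 l2 l3 x y z =
     (complex_of_real \<bar>y \<bullet> z\<bar>) powr l1 *
     (complex_of_real \<bar>z \<bullet> x\<bar>) powr l2 *
     (complex_of_real \<bar>x \<bullet> y\<bar>) powr l3"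

end

theory Submission
  imports Defs
begin

text \<open>
  By the cone construction of \<open>sphere_measure\<close>, the integral over three spheres is, up to the
  factor \<open>N\<^sup>3\<close>, the integral over three punctured unit balls of \<open>|h_lambda|\<close> at the normalized
  points \<open>sgn x, sgn y, sgn z\<close>, and \<open>|h_lambda| = |y\<bullet>z|^a |z\<bullet>x|^b |x\<bullet>y|^c\<close> with
  \<open>(a, b, c) = Re \<lambda>\<close>.

  Convergence for \<open>a, b, c > -1\<close>: since the balls have radius 1, normalizing \<open>y\<close> and \<open>z\<close> only
  shrinks the integrand once the exponents are replaced by \<open>min a 0, min b 0, min c 0\<close>, so it
  suffices to integrate over the cube \<open>[-1,1]\<^sup>N\<close>, uniformly in the unit vector \<open>x\<close>. Choose a
  coordinate \<open>j\<close> with \<open>(x\<bullet>j)\<^sup>2 \<ge> 1/N\<close>. The shear \<open>z \<mapsto> z + ((z\<bullet>j - x\<bullet>z) / (x\<bullet>j)) j\<close> has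
  Jacobian \<open>1 / (x\<bullet>j)\<close> and turns \<open>z\<bullet>x\<close> into the coordinate \<open>z\<bullet>j\<close>. Integrating along a second
  coordinate direction \<open>k\<close>, the factor \<open>|y\<bullet>z|^a\<close> becomes \<open>|q + t s|^a\<close> with slope
  \<open>s = shear y \<bullet> shear k\<close>, whose integral is bounded uniformly in \<open>q\<close>; this is done first for
  \<open>z\<close> and then for \<open>y\<close>, where the slope is \<open>|shear k|\<^sup>2 \<ge> 1\<close>.

  Divergence for \<open>a \<le> -1\<close>: near the configuration \<open>x \<sim> e\<^sub>1 + e\<^sub>2, y \<sim> e\<^sub>1, z \<sim> e\<^sub>2\<close> the
  factors \<open>|z\<bullet>x|\<close> and \<open>|x\<bullet>y|\<close> are bounded below, while for every such \<open>y\<close> the integral of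
  \<open>|y\<bullet>z|^a\<close> over a ball centred on \<open>y\<^sup>\<bottom>\<close> diverges: after a shear it is \<open>\<integral>|t|^a dt\<close> near
  \<open>t = 0\<close>. The conditions on \<open>b\<close> and \<open>c\<close> follow by permuting the variables (Fubini).
\<close>

section \<open>One-dimensional power integrals\<close>

lemma nn_integral_abs_powr_interval_finite:
  fixes a r :: real
  assumes a: "a > -1" and r: "r \<ge> 0"
  shows "(\<integral>\<^sup>+t. indicator {-r..r} t * ennreal (\<bar>t\<bar> powr a) \<partial>lborel) < \<infinity>"
proof -
  let ?I = "\<lambda>A. \<integral>\<^sup>+t. indicator A t * ennreal (\<bar>t\<bar> powr a) \<partial>lborel"
  have right: "?I {0..r} = ennreal (r powr (a + 1) / (a + 1))"
  proof -
    have "?I {0..r} = (\<integral>\<^sup>+t. ennreal (t powr a) * indicator {0..r} t \<partial>lborel)"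
      by (intro nn_integral_cong) (auto simp: indicator_def)
    also have "\<dots> = ennreal (r powr (a + 1) / (a + 1))"
      by (rule nn_integral_has_integral_lebesgue'[OF _ has_integral_powr_from_0[OF a r]]) auto
    finally show ?thesis .
  qed
  have left: "?I {-r..0} = ?I {0..r}"
  proof -
    have "?I {-r..0} = ennreal \<bar>-1\<bar> *
        (\<integral>\<^sup>+t. indicator {-r..0} (0 + -1 * t) * ennreal (\<bar>0 + -1 * t\<bar> powr a) \<partial>lborel)"
      by (rule nn_integral_real_affine) auto
    also have "\<dots> = ?I {0..r}"
      by (simp, intro nn_integral_cong) (auto simp: indicator_def)
    finally show ?thesis .
  qed
  have "?I {-r..r} \<le> (\<integral>\<^sup>+t. indicator {0..r} t * ennreal (\<bar>t\<bar> powr a)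
      + indicator {-r..0} t * ennreal (\<bar>t\<bar> powr a) \<partial>lborel)"
    by (intro nn_integral_mono) (auto simp: indicator_def)
  also have "\<dots> = ?I {0..r} + ?I {-r..0}"
    by (rule nn_integral_add) auto
  finally show ?thesis
    using left right by (simp add: order_le_less_trans ennreal_add_eq_top top.not_eq_extremum)
qed

text \<open>Uniformity in the position \<open>t0\<close> of the singularity: near it the integrand is a
  translate of the one on \<open>[-3R, 3R]\<close>, and far from it the integrand is at most 1.\<close>

lemma nn_integral_abs_powr_shift_bounded:
  fixes a R :: real
  assumes a: "-1 < a" "a \<le> 0" and R: "R \<ge> 1"
  obtains K where "0 < K" "K < \<infinity>"
    "\<And>t0. (\<integral>\<^sup>+t. indicator {-R..R} t * ennreal (\<bar>t - t0\<bar> powr a) \<partial>lborel) \<le> K"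
proof -
  define K where "K = (\<integral>\<^sup>+t. indicator {-(3*R)..3*R} t * ennreal (\<bar>t\<bar> powr a) \<partial>lborel) + ennreal (2*R)"
  have "0 < ennreal (2*R)" "ennreal (2*R) \<le> K"
    using R by (auto simp: K_def)
  then have "0 < K" by (rule less_le_trans)
  moreover have "K < \<infinity>"
    unfolding K_def using nn_integral_abs_powr_interval_finite[OF a(1), of "3*R"] R
    by (simp add: ennreal_add_eq_top less_top)
  moreover have "(\<integral>\<^sup>+t. indicator {-R..R} t * ennreal (\<bar>t - t0\<bar> powr a) \<partial>lborel) \<le> K" for t0
  proof (cases "\<bar>t0\<bar> \<le> 2*R")
    case True
    have "(\<integral>\<^sup>+t. indicator {-R..R} t * ennreal (\<bar>t - t0\<bar> powr a) \<partial>lborel)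
       \<le> (\<integral>\<^sup>+t. indicator {t0-3*R..t0+3*R} t * ennreal (\<bar>t - t0\<bar> powr a) \<partial>lborel)"
      using True by (intro nn_integral_mono) (auto simp: indicator_def)
    also have "\<dots> = ennreal \<bar>1\<bar> * (\<integral>\<^sup>+t. indicator {t0-3*R..t0+3*R} (t0 + 1 * t)
        * ennreal (\<bar>(t0 + 1 * t) - t0\<bar> powr a) \<partial>lborel)"
      by (rule nn_integral_real_affine) auto
    also have "\<dots> = (\<integral>\<^sup>+t. indicator {-(3*R)..3*R} t * ennreal (\<bar>t\<bar> powr a) \<partial>lborel)"
      by (simp, intro nn_integral_cong) (auto simp: indicator_def)
    also have "\<dots> \<le> K" unfolding K_def by simp
    finally show ?thesis .
  next
    case False
    have "(\<integral>\<^sup>+t. indicator {-R..R} t * ennreal (\<bar>t - t0\<bar> powr a) \<partial>lborel)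
       \<le> (\<integral>\<^sup>+t. indicator {-R..R::real} t \<partial>lborel)"
    proof (rule nn_integral_mono)
      fix t
      show "indicator {-R..R} t * ennreal (\<bar>t - t0\<bar> powr a) \<le> indicator {-R..R} t"
      proof (cases "t \<in> {-R..R}")
        case True
        then have "\<bar>t - t0\<bar> \<ge> 1" using False R by auto
        then have "\<bar>t - t0\<bar> powr a \<le> 1" using a powr_mono[of a 0 "\<bar>t - t0\<bar>"] by (auto split: if_splits)
        then show ?thesis using True by (simp add: indicator_def)
      qed (auto simp: indicator_def)
    qed
    also have "\<dots> = ennreal (2*R)" using R by simp
    also have "\<dots> \<le> K" unfolding K_def by simp
    finally show ?thesis .
  qed
  ultimately show ?thesis using that by blast
qed

text \<open>The power \<open>\<bar>s\<bar> powr a\<close> with the value \<open>\<infinity>\<close> at the singularity, where \<open>0 powr a = 0\<close>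
  would give a useless upper bound.\<close>

definition abs_powr_top :: "real \<Rightarrow> real \<Rightarrow> ennreal" where
  "abs_powr_top a s = (if s = 0 then \<infinity> else ennreal (\<bar>s\<bar> powr a))"

lemma borel_measurable_abs_powr_top [measurable]: "abs_powr_top a \<in> borel_measurable borel"
  unfolding abs_powr_top_def by measurable

lemma ennreal_abs_powr_le_abs_powr_top: "ennreal (\<bar>s\<bar> powr a) \<le> abs_powr_top a s"
  by (simp add: abs_powr_top_def)

lemma nn_integral_abs_powr_top_affine_le:
  fixes a s q R :: real
  assumes K: "\<And>t0. (\<integral>\<^sup>+t. indicator {-R..R} t * ennreal (\<bar>t - t0\<bar> powr a) \<partial>lborel) \<le> K"
    and K_pos: "0 < K"
  shows "(\<integral>\<^sup>+t. indicator {-R..R} t * abs_powr_top a (q + t * s) \<partial>lborel) \<le> abs_powr_top a s * K"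
proof (cases "s = 0")
  case True
  then show ?thesis using K_pos by (simp add: abs_powr_top_def)
next
  case False
  have "AE t in lborel. t \<noteq> - q / s" by (rule AE_lborel_singleton)
  then have "AE t in lborel. indicator {-R..R} t * abs_powr_top a (q + t * s)
      = ennreal (\<bar>s\<bar> powr a) * (indicator {-R..R} t * ennreal (\<bar>t - (- q / s)\<bar> powr a))"
  proof eventually_elim
    case (elim t)
    then have "q + t * s \<noteq> 0" using False by (auto simp: field_simps)
    moreover have "\<bar>q + t * s\<bar> = \<bar>s\<bar> * \<bar>t - (- q / s)\<bar>"
      using False by (simp add: abs_mult[symmetric] algebra_simps)
    ultimately show ?case by (simp add: abs_powr_top_def powr_mult ennreal_mult' mult_ac)
  qed
  then have "(\<integral>\<^sup>+t. indicator {-R..R} t * abs_powr_top a (q + t * s) \<partial>lborel)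
      = (\<integral>\<^sup>+t. ennreal (\<bar>s\<bar> powr a) * (indicator {-R..R} t * ennreal (\<bar>t - (- q / s)\<bar> powr a)) \<partial>lborel)"
    by (rule nn_integral_cong_AE)
  also have "\<dots> = ennreal (\<bar>s\<bar> powr a) * (\<integral>\<^sup>+t. indicator {-R..R} t * ennreal (\<bar>t - (- q / s)\<bar> powr a) \<partial>lborel)"
    by (rule nn_integral_cmult) simp
  also have "\<dots> \<le> ennreal (\<bar>s\<bar> powr a) * K"
    by (intro mult_left_mono K) simp
  finally show ?thesis using False by (simp add: abs_powr_top_def)
qed

lemma nn_integral_inverse_diverges:
  fixes e :: real
  assumes e: "e > 0"
  shows "(\<integral>\<^sup>+t. indicator {0<..e} t * ennreal (1 / t) \<partial>lborel) = \<infinity>"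
proof -
  let ?I = "\<integral>\<^sup>+t. indicator {0<..e} t * ennreal (1 / t) \<partial>lborel"
  have ge: "ennreal M \<le> ?I" if M: "M \<ge> 0" for M :: real
  proof -
    define h where "h = e * exp (- M)"
    have h: "0 < h" "h \<le> e" using e M by (auto simp: h_def mult_le_cancel_left1)
    have HI: "((\<lambda>t. 1 / t) has_integral (ln e - ln h)) {h..e}"
    proof (rule fundamental_theorem_of_calculus)
      show "h \<le> e" by fact
      fix x assume "x \<in> {h..e}"
      then have "x > 0" using h by auto
      then show "(ln has_vector_derivative 1 / x) (at x within {h..e})"
        by (auto intro!: derivative_eq_intros simp: has_real_derivative_iff_has_vector_derivative[symmetric])
    qed
    have "(\<integral>\<^sup>+t. ennreal (1 / t) * indicator {h..e} t \<partial>lborel) = ennreal (ln e - ln h)"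
      by (rule nn_integral_has_integral_lebesgue'[OF _ HI]) (use h in auto)
    also have "ln e - ln h = M" using e M by (simp add: h_def ln_mult)
    finally have "ennreal M = (\<integral>\<^sup>+t. ennreal (1 / t) * indicator {h..e} t \<partial>lborel)" ..
    also have "\<dots> \<le> ?I"
      using h by (intro nn_integral_mono) (auto simp: indicator_def)
    finally show ?thesis .
  qed
  show ?thesis
  proof (rule ccontr)
    assume "?I \<noteq> \<infinity>"
    then obtain r where r: "?I = ennreal r" "r \<ge> 0" by (cases ?I) auto
    with ge[of "r + 1"] show False by simp
  qed
qed

lemma nn_integral_abs_powr_diverges:
  fixes a d :: real
  assumes a: "a \<le> -1" and d: "d > 0"
  shows "(\<integral>\<^sup>+t. indicator {-d..d} t * ennreal (\<bar>t\<bar> powr a) \<partial>lborel) = \<infinity>"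
proof -
  define e where "e = min d 1"
  have e: "e > 0" "e \<le> d" "e \<le> 1" using d by (auto simp: e_def)
  have "\<infinity> = (\<integral>\<^sup>+t. indicator {0<..e} t * ennreal (1 / t) \<partial>lborel)"
    using nn_integral_inverse_diverges[OF e(1)] by simp
  also have "\<dots> \<le> (\<integral>\<^sup>+t. indicator {-d..d} t * ennreal (\<bar>t\<bar> powr a) \<partial>lborel)"
  proof (rule nn_integral_mono)
    fix t
    show "indicator {0<..e} t * ennreal (1 / t) \<le> indicator {-d..d} t * ennreal (\<bar>t\<bar> powr a)"
    proof (cases "t \<in> {0<..e}")
      case True
      then have t: "0 < t" "t \<le> 1" "t \<le> d" using e by auto
      have "1 / t = t powr (-1)" using t by (simp add: powr_minus_divide)
      also have "\<dots> \<le> t powr a" using t a by (intro powr_mono') auto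
      finally show ?thesis using True t d by (auto simp: indicator_def intro!: ennreal_leI)
    qed (auto simp: indicator_def)
  qed
  finally show ?thesis by (simp add: top_unique)
qed

lemma nn_integral_eq_top_of_top_on:
  assumes "A \<in> sets M" "emeasure M A \<noteq> 0" "\<And>x. x \<in> A \<Longrightarrow> f x = \<infinity>"
  shows "(\<integral>\<^sup>+x. f x \<partial>M) = \<infinity>"
proof -
  have "\<infinity> = \<infinity> * emeasure M A"
    using assms(2) by simp
  also have "\<dots> = (\<integral>\<^sup>+x. \<infinity> * indicator A x \<partial>M)"
    by (rule nn_integral_cmult_indicator[symmetric]) (rule assms(1))
  also have "\<dots> \<le> (\<integral>\<^sup>+x. f x \<partial>M)"
    using assms(3) by (intro nn_integral_mono) (auto simp: indicator_def)
  finally show ?thesis by (simp add: top_unique)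
qed

lemma nn_integral_lborel_split_Basis:
  fixes f :: "'a::euclidean_space \<Rightarrow> ennreal" and b :: 'a
  assumes b: "b \<in> Basis" and f[measurable]: "f \<in> borel_measurable borel"
  shows "(\<integral>\<^sup>+x. f x \<partial>lborel) = (\<integral>\<^sup>+\<omega>. (\<integral>\<^sup>+t. f (t *\<^sub>R b + (\<Sum>c\<in>Basis-{b}. \<omega> c *\<^sub>R c)) \<partial>lborel)
      \<partial>(Pi\<^sub>M (Basis-{b}) (\<lambda>_. lborel)))"
proof -
  interpret product_sigma_finite "\<lambda>_::'a. lborel :: real measure"
    by standard
  have ins: "Basis = insert b (Basis - {b})" using b by auto
  have "(\<integral>\<^sup>+x. f x \<partial>lborel) = (\<integral>\<^sup>+\<omega>. f (\<Sum>c\<in>Basis. \<omega> c *\<^sub>R c) \<partial>(Pi\<^sub>M Basis (\<lambda>_. lborel)))"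
    by (subst lborel_eq) (simp add: nn_integral_distr)
  also have "\<dots> = (\<integral>\<^sup>+\<omega>. f (\<Sum>c\<in>Basis. \<omega> c *\<^sub>R c) \<partial>(Pi\<^sub>M (insert b (Basis - {b})) (\<lambda>_. lborel)))"
    using ins by simp
  also have "\<dots> = (\<integral>\<^sup>+\<omega>. (\<integral>\<^sup>+t. f (\<Sum>c\<in>Basis. fun_upd \<omega> b t c *\<^sub>R c) \<partial>lborel)
      \<partial>(Pi\<^sub>M (Basis-{b}) (\<lambda>_. lborel)))"
    by (rule product_nn_integral_insert) (use ins in auto)
  also have "(\<lambda>\<omega> t. (\<Sum>c\<in>Basis. fun_upd \<omega> b t c *\<^sub>R c)) = (\<lambda>\<omega> t. t *\<^sub>R b + (\<Sum>c\<in>Basis-{b}. \<omega> c *\<^sub>R c))"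
    by (intro ext, subst sum.remove[OF finite_Basis b]) (auto intro!: sum.cong)
  finally show ?thesis by simp
qed

lemma inner_split_Basis:
  fixes b c :: "'a::euclidean_space"
  assumes "b \<in> Basis" "c \<in> Basis"
  shows "(t *\<^sub>R b + (\<Sum>d\<in>Basis-{b}. \<omega> d *\<^sub>R d)) \<bullet> c = (if c = b then t else \<omega> c)"
  using assms by (cases "c = b") (auto simp: inner_add_left inner_sum_left inner_Basis if_distrib sum.delta cong: if_cong)

definition cube :: "real \<Rightarrow> 'a::euclidean_space set" where
  "cube R = cbox (- (R *\<^sub>R One)) (R *\<^sub>R One)"

lemma sets_cube [measurable]: "cube R \<in> sets borel"
  by (simp add: cube_def)

lemma mem_cube: "y \<in> cube R \<longleftrightarrow> (\<forall>i\<in>Basis. \<bar>y \<bullet> i\<bar> \<le> R)"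
  by (auto simp: cube_def mem_box abs_le_iff)

lemma indicator_cube: "indicator (cube R) y = (\<Prod>i\<in>Basis. indicator {-R..R} (y \<bullet> i) :: ennreal)"
proof (cases "y \<in> cube R")
  case True
  then have "(\<Prod>i\<in>Basis. indicator {-R..R} (y \<bullet> i)) = (1::ennreal)"
    by (intro prod.neutral) (auto simp: mem_cube abs_le_iff)
  with True show ?thesis by simp
next
  case False
  then obtain i where "i \<in> Basis" "\<bar>y \<bullet> i\<bar> > R" by (auto simp: mem_cube not_le)
  then have "(\<Prod>i\<in>Basis. indicator {-R..R} (y \<bullet> i)) = (0::ennreal)"
    by (intro prod_zero bexI[of _ i]) (auto simp: indicator_def abs_if split: if_splits)
  with False show ?thesis by simp
qed

definition face_integral :: "nat \<Rightarrow> real \<Rightarrow> real \<Rightarrow> ennreal" where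
  "face_integral n R b =
     (\<integral>\<^sup>+s. indicator {-R..R} s * ennreal (\<bar>s\<bar> powr b) \<partial>lborel) * ennreal (2 * R) ^ (n - 2)"

lemma face_integral_finite: "-1 < b \<Longrightarrow> 0 \<le> R \<Longrightarrow> face_integral n R b < \<infinity>"
  unfolding face_integral_def using nn_integral_abs_powr_interval_finite[of b R]
  by (simp add: ennreal_mult_less_top power_less_top_ennreal)

lemma nn_integral_face_abs_powr:
  fixes j k :: "'a::euclidean_space"
  assumes k: "k \<in> Basis" and j: "j \<in> Basis" "j \<noteq> k" and R: "R \<ge> 0"
  shows "(\<integral>\<^sup>+\<omega>. (\<Prod>i\<in>Basis-{k}. indicator {-R..R} (\<omega> i)) * ennreal (\<bar>\<omega> j\<bar> powr b)
      \<partial>(Pi\<^sub>M (Basis-{k}) (\<lambda>_. lborel)))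
    = face_integral DIM('a) R b"
proof -
  interpret product_sigma_finite "\<lambda>_::'a. lborel :: real measure" by standard
  define f where "f i s = indicator {-R..R} s * (if i = j then ennreal (\<bar>s\<bar> powr b) else 1)" for i s
  have [measurable]: "f i \<in> borel_measurable borel" for i unfolding f_def by measurable
  have jk: "j \<in> Basis - {k}" using j by auto
  have "(\<integral>\<^sup>+\<omega>. (\<Prod>i\<in>Basis-{k}. indicator {-R..R} (\<omega> i)) * ennreal (\<bar>\<omega> j\<bar> powr b)
      \<partial>(Pi\<^sub>M (Basis-{k}) (\<lambda>_. lborel)))
     = (\<integral>\<^sup>+\<omega>. (\<Prod>i\<in>Basis-{k}. f i (\<omega> i)) \<partial>(Pi\<^sub>M (Basis-{k}) (\<lambda>_. lborel)))"
  proof (rule nn_integral_cong)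
    fix \<omega> :: "'a \<Rightarrow> real"
    have "(\<Prod>i\<in>Basis-{k}. f i (\<omega> i)) = f j (\<omega> j) * (\<Prod>i\<in>Basis-{k}-{j}. indicator {-R..R} (\<omega> i))"
      using jk by (subst prod.remove[OF _ jk]) (auto simp: f_def intro!: prod.cong)
    moreover have "(\<Prod>i\<in>Basis-{k}. indicator {-R..R} (\<omega> i))
        = indicator {-R..R} (\<omega> j) * (\<Prod>i\<in>Basis-{k}-{j}. indicator {-R..R} (\<omega> i) :: ennreal)"
      using jk by (subst prod.remove[OF _ jk]) auto
    ultimately show "(\<Prod>i\<in>Basis-{k}. indicator {-R..R} (\<omega> i)) * ennreal (\<bar>\<omega> j\<bar> powr b)
        = (\<Prod>i\<in>Basis-{k}. f i (\<omega> i))"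
      by (simp add: f_def mult_ac)
  qed
  also have "\<dots> = (\<Prod>i\<in>Basis-{k}. (\<integral>\<^sup>+s. f i s \<partial>lborel))"
    by (rule product_nn_integral_prod) auto
  also have "\<dots> = (\<integral>\<^sup>+s. f j s \<partial>lborel) * (\<Prod>i\<in>Basis-{k}-{j}. (\<integral>\<^sup>+s. f i s \<partial>lborel))"
    by (subst prod.remove[OF _ jk]) auto
  also have "(\<Prod>i\<in>Basis-{k}-{j}. (\<integral>\<^sup>+s. f i s \<partial>lborel)) = (\<Prod>i\<in>Basis-{k}-{j}. ennreal (2 * R))"
    using R by (intro prod.cong) (auto simp: f_def)
  also have "\<dots> = ennreal (2 * R) ^ card (Basis - {k} - {j})"
    by simp
  also have "card (Basis - {k} - {j}) = DIM('a) - 2"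
    using jk k by (simp add: card_Diff_singleton)
  finally show ?thesis by (simp add: f_def face_integral_def)
qed

text \<open>The coordinate \<open>k\<close> is integrated innermost: along each line parallel to \<open>k\<close> the
  linear form \<open>L\<close> is affine with slope \<open>L k\<close>.\<close>

lemma nn_integral_cube_line_le:
  fixes L :: "'a::euclidean_space \<Rightarrow> real" and G :: "real \<Rightarrow> ennreal"
  assumes j: "j \<in> Basis" and k: "k \<in> Basis" "k \<noteq> j" and R: "R \<ge> 0"
    and L: "linear L" and G[measurable]: "G \<in> borel_measurable borel"
    and line: "\<And>q. (\<integral>\<^sup>+t. indicator {-R..R} t * G (q + t * L k) \<partial>lborel) \<le> B"
  shows "(\<integral>\<^sup>+y. indicator (cube R) y * ennreal (\<bar>y \<bullet> j\<bar> powr b) * G (L y) \<partial>lborel)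
    \<le> face_integral DIM('a) R b * B"
proof -
  have [measurable]: "L \<in> borel_measurable borel"
    using L by (intro borel_measurable_continuous_onI linear_continuous_on) (simp add: linear_conv_bounded_linear)
  have jk: "j \<in> Basis - {k}" using j k by auto
  define S where "S \<omega> = (\<Sum>c\<in>Basis-{k}. \<omega> c *\<^sub>R c)" for \<omega> :: "'a \<Rightarrow> real"
  define F where "F \<omega> = (\<Prod>i\<in>Basis-{k}. indicator {-R..R} (\<omega> i)) * ennreal (\<bar>\<omega> j\<bar> powr b)"
    for \<omega> :: "'a \<Rightarrow> real"
  have [measurable]: "F \<in> borel_measurable (Pi\<^sub>M (Basis-{k}) (\<lambda>_. lborel))"
  proof -
    have "(\<lambda>\<omega>::'a\<Rightarrow>real. \<omega> j) \<in> borel_measurable (Pi\<^sub>M (Basis-{k}) (\<lambda>_. lborel))"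
      using measurable_component_singleton[OF jk, of "\<lambda>_. lborel"] by (simp cong: measurable_cong_sets)
    moreover have "(\<lambda>s::real. ennreal (\<bar>s\<bar> powr b)) \<in> borel_measurable borel" by measurable
    ultimately have [measurable]: "(\<lambda>\<omega>::'a\<Rightarrow>real. ennreal (\<bar>\<omega> j\<bar> powr b))
        \<in> borel_measurable (Pi\<^sub>M (Basis-{k}) (\<lambda>_. lborel))"
      using measurable_compose by fastforce
    show ?thesis unfolding F_def by measurable
  qed
  have split: "indicator (cube R) (t *\<^sub>R k + S \<omega>) * ennreal (\<bar>(t *\<^sub>R k + S \<omega>) \<bullet> j\<bar> powr b)
      * G (L (t *\<^sub>R k + S \<omega>)) = F \<omega> * (indicator {-R..R} t * G (L (S \<omega>) + t * L k))" for t \<omega>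
  proof -
    have "(\<Prod>i\<in>Basis-{k}. indicator {-R..R} ((t *\<^sub>R k + S \<omega>) \<bullet> i))
        = (\<Prod>i\<in>Basis-{k}. indicator {-R..R} (\<omega> i) :: ennreal)"
      using k by (intro prod.cong) (auto simp: S_def inner_split_Basis)
    then have "indicator (cube R) (t *\<^sub>R k + S \<omega>)
        = indicator {-R..R} t * (\<Prod>i\<in>Basis-{k}. indicator {-R..R} (\<omega> i) :: ennreal)"
      unfolding indicator_cube using k by (subst prod.remove[OF finite_Basis k(1)]) (simp add: S_def inner_split_Basis)
    moreover have "(t *\<^sub>R k + S \<omega>) \<bullet> j = \<omega> j"
      using j k by (simp add: S_def inner_split_Basis)
    moreover have "L (t *\<^sub>R k + S \<omega>) = L (S \<omega>) + t * L k"
      using L by (simp add: linear_add linear_scale)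
    ultimately show ?thesis by (simp add: F_def mult_ac)
  qed
  have "(\<integral>\<^sup>+y. indicator (cube R) y * ennreal (\<bar>y \<bullet> j\<bar> powr b) * G (L y) \<partial>lborel)
      = (\<integral>\<^sup>+\<omega>. (\<integral>\<^sup>+t. indicator (cube R) (t *\<^sub>R k + S \<omega>) * ennreal (\<bar>(t *\<^sub>R k + S \<omega>) \<bullet> j\<bar> powr b)
          * G (L (t *\<^sub>R k + S \<omega>)) \<partial>lborel) \<partial>(Pi\<^sub>M (Basis-{k}) (\<lambda>_. lborel)))"
    unfolding S_def by (rule nn_integral_lborel_split_Basis[OF k(1)]) measurable
  also have "\<dots> = (\<integral>\<^sup>+\<omega>. F \<omega> * (\<integral>\<^sup>+t. indicator {-R..R} t * G (L (S \<omega>) + t * L k) \<partial>lborel)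
      \<partial>(Pi\<^sub>M (Basis-{k}) (\<lambda>_. lborel)))"
    unfolding split by (intro nn_integral_cong nn_integral_cmult) measurable
  also have "\<dots> \<le> (\<integral>\<^sup>+\<omega>. F \<omega> * B \<partial>(Pi\<^sub>M (Basis-{k}) (\<lambda>_. lborel)))"
    by (intro nn_integral_mono mult_left_mono line) simp
  also have "\<dots> = (\<integral>\<^sup>+\<omega>. F \<omega> \<partial>(Pi\<^sub>M (Basis-{k}) (\<lambda>_. lborel))) * B"
    by (rule nn_integral_multc) measurable
  also have "(\<integral>\<^sup>+\<omega>. F \<omega> \<partial>(Pi\<^sub>M (Basis-{k}) (\<lambda>_. lborel))) = face_integral DIM('a) R b"
    unfolding F_def using j k R by (intro nn_integral_face_abs_powr) auto
  finally show ?thesis .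
qed

section \<open>Shears\<close>

definition shear :: "'a::euclidean_space \<Rightarrow> 'a \<Rightarrow> 'a \<Rightarrow> 'a" where
  "shear x j z = z + ((z \<bullet> j - x \<bullet> z) / (x \<bullet> j)) *\<^sub>R j"

lemma linear_shear: "linear (shear x j)"
proof (rule linearI)
  show "shear x j (u + v) = shear x j u + shear x j v" for u v
    unfolding shear_def
    by (simp add: inner_add_left inner_add_right add_divide_distrib[symmetric]
        scaleR_add_left[symmetric] algebra_simps)
  show "shear x j (c *\<^sub>R u) = c *\<^sub>R shear x j u" for c u
    unfolding shear_def by (simp add: algebra_simps scaleR_add_right)
qed

lemma linear_inner_shear: "linear (\<lambda>z. w \<bullet> shear x j z)" "linear (\<lambda>z. shear x j z \<bullet> w)"
  using linear_compose[OF linear_shear bounded_linear.linear[OF bounded_linear_inner_right]]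
    linear_compose[OF linear_shear bounded_linear.linear[OF bounded_linear_inner_left]]
  by (simp_all add: o_def)

lemma inner_shear: "x \<bullet> j \<noteq> 0 \<Longrightarrow> x \<bullet> shear x j z = z \<bullet> j"
  unfolding shear_def by (simp add: inner_add_right field_simps)

lemma shear_inner_Basis: "j \<in> Basis \<Longrightarrow> i \<in> Basis \<Longrightarrow> i \<noteq> j \<Longrightarrow> shear x j z \<bullet> i = z \<bullet> i"
  unfolding shear_def by (simp add: inner_add_left inner_Basis)

lemma shear_orthogonal:
  assumes "j \<in> Basis" "x \<bullet> j \<noteq> 0" "x \<bullet> z = 0"
  shows "shear x j (z - (z \<bullet> j) *\<^sub>R j) = z"
  using assms unfolding shear_def by (simp add: inner_diff_left inner_diff_right)

lemma inner_shear_Basis_self_ge: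
  fixes j k :: "'a::euclidean_space"
  assumes "j \<in> Basis" "k \<in> Basis" "k \<noteq> j"
  shows "1 \<le> shear x j k \<bullet> shear x j k"
proof -
  define c where "c = (k \<bullet> j - x \<bullet> k) / (x \<bullet> j)"
  have "shear x j k \<bullet> shear x j k = 1 + c * c"
    using assms unfolding shear_def c_def[symmetric] by (simp add: inner_add_left inner_add_right inner_Basis)
  then show ?thesis by simp
qed

text \<open>The shear has Jacobian \<open>1 / (x \<bullet> j)\<close>: on each line parallel to \<open>j\<close> it is an affine
  map with that slope.\<close>

lemma nn_integral_shear:
  fixes g :: "'a::euclidean_space \<Rightarrow> ennreal"
  assumes j: "j \<in> Basis" and xj: "x \<bullet> j \<noteq> 0" and g[measurable]: "g \<in> borel_measurable borel"
  shows "(\<integral>\<^sup>+z. g (shear x j z) \<partial>lborel) = ennreal \<bar>x \<bullet> j\<bar> * (\<integral>\<^sup>+z. g z \<partial>lborel)"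
proof -
  have [measurable]: "shear x j \<in> borel_measurable borel"
    unfolding shear_def by measurable
  define S where "S \<omega> = (\<Sum>c\<in>Basis-{j}. \<omega> c *\<^sub>R c)" for \<omega> :: "'a \<Rightarrow> real"
  have [measurable]: "S \<in> borel_measurable (Pi\<^sub>M (Basis-{j}) (\<lambda>_. lborel))"
    unfolding S_def by measurable
  have line: "(\<integral>\<^sup>+t. g (shear x j (t *\<^sub>R j + S \<omega>)) \<partial>lborel)
      = ennreal \<bar>x \<bullet> j\<bar> * (\<integral>\<^sup>+t. g (t *\<^sub>R j + S \<omega>) \<partial>lborel)" for \<omega>
  proof -
    define q where "q = x \<bullet> S \<omega>"
    have shear_line: "shear x j (t *\<^sub>R j + S \<omega>) = ((t - q) / (x \<bullet> j)) *\<^sub>R j + S \<omega>" for t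
    proof -
      have "(t *\<^sub>R j + S \<omega>) \<bullet> j = t" using j by (simp add: S_def inner_split_Basis)
      moreover have "t + (t - (t * (x \<bullet> j) + q)) / (x \<bullet> j) = (t - q) / (x \<bullet> j)"
        using xj by (simp add: field_simps)
      ultimately show ?thesis
        unfolding shear_def q_def by (simp add: inner_add_right scaleR_add_left[symmetric] algebra_simps)
    qed
    have "(\<integral>\<^sup>+t. g (t *\<^sub>R j + S \<omega>) \<partial>lborel)
        = ennreal \<bar>1 / (x \<bullet> j)\<bar> * (\<integral>\<^sup>+t. g ((- q / (x \<bullet> j) + (1 / (x \<bullet> j)) * t) *\<^sub>R j + S \<omega>) \<partial>lborel)"
      by (rule nn_integral_real_affine) (use xj in auto)
    also have "(\<lambda>t. - q / (x \<bullet> j) + (1 / (x \<bullet> j)) * t) = (\<lambda>t. (t - q) / (x \<bullet> j))"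
      using xj by (simp add: field_simps)
    finally have "ennreal \<bar>x \<bullet> j\<bar> * (\<integral>\<^sup>+t. g (t *\<^sub>R j + S \<omega>) \<partial>lborel)
        = (ennreal \<bar>x \<bullet> j\<bar> * ennreal (1 / \<bar>x \<bullet> j\<bar>)) * (\<integral>\<^sup>+t. g (shear x j (t *\<^sub>R j + S \<omega>)) \<partial>lborel)"
      by (simp add: shear_line mult.assoc)
    also have "ennreal \<bar>x \<bullet> j\<bar> * ennreal (1 / \<bar>x \<bullet> j\<bar>) = 1"
      using xj by (simp add: ennreal_mult'[symmetric])
    finally show ?thesis by simp
  qed
  have "(\<integral>\<^sup>+z. g (shear x j z) \<partial>lborel)
      = (\<integral>\<^sup>+\<omega>. (\<integral>\<^sup>+t. g (shear x j (t *\<^sub>R j + S \<omega>)) \<partial>lborel) \<partial>(Pi\<^sub>M (Basis-{j}) (\<lambda>_. lborel)))"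
    unfolding S_def by (rule nn_integral_lborel_split_Basis[OF j]) measurable
  also have "\<dots> = ennreal \<bar>x \<bullet> j\<bar> * (\<integral>\<^sup>+\<omega>. (\<integral>\<^sup>+t. g (t *\<^sub>R j + S \<omega>) \<partial>lborel)
      \<partial>(Pi\<^sub>M (Basis-{j}) (\<lambda>_. lborel)))"
    unfolding line by (rule nn_integral_cmult) measurable
  also have "(\<integral>\<^sup>+\<omega>. (\<integral>\<^sup>+t. g (t *\<^sub>R j + S \<omega>) \<partial>lborel) \<partial>(Pi\<^sub>M (Basis-{j}) (\<lambda>_. lborel)))
      = (\<integral>\<^sup>+z. g z \<partial>lborel)"
    unfolding S_def by (rule nn_integral_lborel_split_Basis[OF j, symmetric]) measurable
  finally show ?thesis .
qed

lemma shear_mem_cube: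
  fixes x :: "'a::euclidean_space"
  assumes x: "norm x = 1" and j: "j \<in> Basis" and xj: "x \<bullet> j \<noteq> 0"
    and z: "shear x j z \<in> cube 1"
  shows "z \<in> cube (real DIM('a))"
  unfolding mem_cube
proof
  fix i :: 'a assume i: "i \<in> Basis"
  have coords: "\<bar>shear x j z \<bullet> i\<bar> \<le> 1" if "i \<in> Basis" for i
    using z that by (simp add: mem_cube)
  show "\<bar>z \<bullet> i\<bar> \<le> real DIM('a)"
  proof (cases "i = j")
    case True
    have "\<bar>z \<bullet> j\<bar> = \<bar>x \<bullet> shear x j z\<bar>" using inner_shear[OF xj] by simp
    also have "\<dots> \<le> norm x * norm (shear x j z)" by (rule Cauchy_Schwarz_ineq2)
    also have "\<dots> \<le> (\<Sum>i\<in>Basis. \<bar>shear x j z \<bullet> i\<bar>)" using x norm_le_l1[of "shear x j z"] by simp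
    also have "\<dots> \<le> (\<Sum>i\<in>(Basis::'a set). 1)" using coords by (intro sum_mono) auto
    finally show ?thesis using True by simp
  next
    case False
    have "\<bar>z \<bullet> i\<bar> = \<bar>shear x j z \<bullet> i\<bar>" using shear_inner_Basis[OF j i False] by simp
    also have "\<dots> \<le> 1" using coords i by auto
    also have "1 \<le> real DIM('a)" using DIM_positive by (simp add: Suc_le_eq)
    finally show ?thesis .
  qed
qed

lemma nn_integral_cube_shear_le:
  fixes x :: "'a::euclidean_space" and f :: "'a \<Rightarrow> ennreal"
  assumes x: "norm x = 1" and j: "j \<in> Basis" and xj: "x \<bullet> j \<noteq> 0"
    and f[measurable]: "f \<in> borel_measurable borel"
  shows "(\<integral>\<^sup>+z. indicator (cube 1) z * f z \<partial>lborel)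
    \<le> ennreal (1 / \<bar>x \<bullet> j\<bar>) * (\<integral>\<^sup>+z. indicator (cube (real DIM('a))) z * f (shear x j z) \<partial>lborel)"
proof -
  have "(\<integral>\<^sup>+z. indicator (cube 1) (shear x j z) * f (shear x j z) \<partial>lborel)
      = ennreal \<bar>x \<bullet> j\<bar> * (\<integral>\<^sup>+z. indicator (cube 1) z * f z \<partial>lborel)"
    by (rule nn_integral_shear[OF j xj]) measurable
  then have "(\<integral>\<^sup>+z. indicator (cube 1) z * f z \<partial>lborel)
      = ennreal (1 / \<bar>x \<bullet> j\<bar>) * (\<integral>\<^sup>+z. indicator (cube 1) (shear x j z) * f (shear x j z) \<partial>lborel)"
    using xj by (simp add: mult.assoc[symmetric] ennreal_mult'[symmetric])
  also have "\<dots> \<le> ennreal (1 / \<bar>x \<bullet> j\<bar>) * (\<integral>\<^sup>+z. indicator (cube (real DIM('a))) z * f (shear x j z) \<partial>lborel)"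
    using shear_mem_cube[OF x j xj]
    by (intro mult_left_mono nn_integral_mono mult_right_mono) (auto simp: indicator_def)
  finally show ?thesis .
qed

lemma exists_Basis_inner_sq_ge:
  fixes x :: "'a::euclidean_space"
  assumes x: "norm x = 1"
  obtains j where "j \<in> Basis" "(x \<bullet> j)\<^sup>2 \<ge> 1 / real DIM('a)"
proof -
  have "\<exists>j\<in>Basis. (x \<bullet> j)\<^sup>2 \<ge> 1 / real DIM('a)"
  proof (rule ccontr)
    assume "\<not> ?thesis"
    then have "(\<Sum>j\<in>Basis. (x \<bullet> j)\<^sup>2) < (\<Sum>j\<in>(Basis::'a set). 1 / real DIM('a))"
      by (intro sum_strict_mono) auto
    also have "\<dots> = 1" by simp
    also have "(\<Sum>j\<in>Basis. (x \<bullet> j)\<^sup>2) = x \<bullet> x"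
      by (simp add: euclidean_inner[of x x] power2_eq_square)
    also have "x \<bullet> x = 1" using x by (simp add: dot_square_norm)
    finally show False by simp
  qed
  then show ?thesis using that by blast
qed

lemma exists_Basis_neq:
  assumes "DIM('a::euclidean_space) \<ge> 2" "j \<in> (Basis :: 'a set)"
  obtains k where "k \<in> (Basis :: 'a set)" "k \<noteq> j"
proof -
  have "card (Basis - {j} :: 'a set) \<ge> 1" using assms by (simp add: card_Diff_singleton)
  then have "Basis - {j} \<noteq> ({} :: 'a set)" by (metis card.empty not_one_le_zero)
  then show ?thesis using that by blast
qed

definition abs_kernel :: "real \<Rightarrow> real \<Rightarrow> real \<Rightarrow> 'a::real_inner \<times> 'a \<times> 'a \<Rightarrow> ennreal" where
  "abs_kernel a b c = (\<lambda>(x, y, z).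
     ennreal (\<bar>y \<bullet> z\<bar> powr a) * ennreal (\<bar>z \<bullet> x\<bar> powr b) * ennreal (\<bar>x \<bullet> y\<bar> powr c))"

lemma abs_kernel_apply [simp]:
  "abs_kernel a b c (x, y, z) =
     ennreal (\<bar>y \<bullet> z\<bar> powr a) * ennreal (\<bar>z \<bullet> x\<bar> powr b) * ennreal (\<bar>x \<bullet> y\<bar> powr c)"
  by (simp add: abs_kernel_def)

lemma borel_measurable_abs_kernel [measurable]:
  "abs_kernel a b c \<in> borel_measurable (borel \<Otimes>\<^sub>M borel \<Otimes>\<^sub>M (borel :: 'a::euclidean_space measure))"
  unfolding abs_kernel_def by measurable

lemma nn_integral_cube_inner_powr_le:
  fixes x w :: "'a::euclidean_space"
  assumes x: "norm x = 1" and j: "j \<in> Basis" "x \<bullet> j \<noteq> 0" and k: "k \<in> Basis" "k \<noteq> j"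
    and K: "0 < K" "\<And>t0. (\<integral>\<^sup>+t. indicator {-real DIM('a)..real DIM('a)} t * ennreal (\<bar>t - t0\<bar> powr a) \<partial>lborel) \<le> K"
  shows "(\<integral>\<^sup>+z. indicator (cube 1) z * ennreal (\<bar>w \<bullet> z\<bar> powr a) * ennreal (\<bar>z \<bullet> x\<bar> powr b) \<partial>lborel)
    \<le> ennreal (1 / \<bar>x \<bullet> j\<bar>) * (face_integral DIM('a) (real DIM('a)) b * (abs_powr_top a (w \<bullet> shear x j k) * K))"
proof -
  let ?s = "shear x j" and ?R = "real DIM('a)"
  have pointwise: "indicator (cube ?R) z * (ennreal (\<bar>w \<bullet> ?s z\<bar> powr a) * ennreal (\<bar>?s z \<bullet> x\<bar> powr b))
      \<le> indicator (cube ?R) z * ennreal (\<bar>z \<bullet> j\<bar> powr b) * abs_powr_top a (w \<bullet> ?s z)" for z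
  proof -
    have "\<bar>?s z \<bullet> x\<bar> = \<bar>z \<bullet> j\<bar>" using inner_shear[OF j(2)] by (simp add: inner_commute)
    then have "indicator (cube ?R) z * (ennreal (\<bar>w \<bullet> ?s z\<bar> powr a) * ennreal (\<bar>?s z \<bullet> x\<bar> powr b))
        = (indicator (cube ?R) z * ennreal (\<bar>z \<bullet> j\<bar> powr b)) * ennreal (\<bar>w \<bullet> ?s z\<bar> powr a)"
      by (simp add: mult_ac)
    also have "\<dots> \<le> (indicator (cube ?R) z * ennreal (\<bar>z \<bullet> j\<bar> powr b)) * abs_powr_top a (w \<bullet> ?s z)"
      by (intro mult_left_mono ennreal_abs_powr_le_abs_powr_top) simp
    finally show ?thesis .
  qed
  have "(\<integral>\<^sup>+z. indicator (cube 1) z * ennreal (\<bar>w \<bullet> z\<bar> powr a) * ennreal (\<bar>z \<bullet> x\<bar> powr b) \<partial>lborel)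
      \<le> ennreal (1 / \<bar>x \<bullet> j\<bar>) * (\<integral>\<^sup>+z. indicator (cube ?R) z
        * (ennreal (\<bar>w \<bullet> ?s z\<bar> powr a) * ennreal (\<bar>?s z \<bullet> x\<bar> powr b)) \<partial>lborel)"
    unfolding mult.assoc by (rule nn_integral_cube_shear_le[OF x j]) measurable
  also have "\<dots> \<le> ennreal (1 / \<bar>x \<bullet> j\<bar>)
      * (\<integral>\<^sup>+z. indicator (cube ?R) z * ennreal (\<bar>z \<bullet> j\<bar> powr b) * abs_powr_top a (w \<bullet> ?s z) \<partial>lborel)"
    by (intro mult_left_mono nn_integral_mono pointwise) simp
  also have "\<dots> \<le> ennreal (1 / \<bar>x \<bullet> j\<bar>) * (face_integral DIM('a) ?R b * (abs_powr_top a (w \<bullet> ?s k) * K))"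
    by (intro mult_left_mono nn_integral_cube_line_le[OF j(1) k _ linear_inner_shear(1), where G = "abs_powr_top a"]
        nn_integral_abs_powr_top_affine_le K) auto
  finally show ?thesis .
qed

lemma nn_integral_cube_outer_powr_le:
  fixes x :: "'a::euclidean_space"
  assumes x: "norm x = 1" and j: "j \<in> Basis" "x \<bullet> j \<noteq> 0" and k: "k \<in> Basis" "k \<noteq> j" and a: "a \<le> 0"
    and K: "0 < K" "\<And>t0. (\<integral>\<^sup>+t. indicator {-real DIM('a)..real DIM('a)} t * ennreal (\<bar>t - t0\<bar> powr a) \<partial>lborel) \<le> K"
  shows "(\<integral>\<^sup>+y. indicator (cube 1) y * (ennreal (\<bar>x \<bullet> y\<bar> powr c) * abs_powr_top a (y \<bullet> shear x j k)) \<partial>lborel)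
    \<le> ennreal (1 / \<bar>x \<bullet> j\<bar>) * (face_integral DIM('a) (real DIM('a)) c * K)"
proof -
  let ?s = "shear x j" and ?R = "real DIM('a)"
  have "1 \<le> ?s k \<bullet> ?s k" by (rule inner_shear_Basis_self_ge[OF j(1) k])
  then have slope: "abs_powr_top a (?s k \<bullet> ?s k) \<le> 1"
    using a powr_mono[of a 0 "?s k \<bullet> ?s k"] by (auto simp: abs_powr_top_def split: if_splits)
  have "(\<integral>\<^sup>+y. indicator (cube 1) y * (ennreal (\<bar>x \<bullet> y\<bar> powr c) * abs_powr_top a (y \<bullet> ?s k)) \<partial>lborel)
      \<le> ennreal (1 / \<bar>x \<bullet> j\<bar>) * (\<integral>\<^sup>+y. indicator (cube ?R) y
        * (ennreal (\<bar>x \<bullet> ?s y\<bar> powr c) * abs_powr_top a (?s y \<bullet> ?s k)) \<partial>lborel)"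
    by (rule nn_integral_cube_shear_le[OF x j]) measurable
  also have "\<dots> = ennreal (1 / \<bar>x \<bullet> j\<bar>)
      * (\<integral>\<^sup>+y. indicator (cube ?R) y * ennreal (\<bar>y \<bullet> j\<bar> powr c) * abs_powr_top a (?s y \<bullet> ?s k) \<partial>lborel)"
    by (simp add: inner_shear[OF j(2)] mult.assoc)
  also have "\<dots> \<le> ennreal (1 / \<bar>x \<bullet> j\<bar>) * (face_integral DIM('a) ?R c * (abs_powr_top a (?s k \<bullet> ?s k) * K))"
    by (intro mult_left_mono nn_integral_cube_line_le[OF j(1) k _ linear_inner_shear(2), where G = "abs_powr_top a"]
        nn_integral_abs_powr_top_affine_le K) auto
  also have "\<dots> \<le> ennreal (1 / \<bar>x \<bullet> j\<bar>) * (face_integral DIM('a) ?R c * (1 * K))"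
    by (intro mult_left_mono mult_right_mono slope) simp_all
  finally show ?thesis by simp
qed

lemma cube_abs_kernel_integral_bounded:
  fixes a b c :: real
  assumes dim: "DIM('a::euclidean_space) \<ge> 2" and a: "-1 < a" "a \<le> 0" and b: "-1 < b" and c: "-1 < c"
  obtains C where "C < \<infinity>" "\<And>x::'a. norm x = 1 \<Longrightarrow>
      (\<integral>\<^sup>+y. \<integral>\<^sup>+z. indicator (cube 1) y * indicator (cube 1) z * abs_kernel a b c (x, y, z) \<partial>lborel \<partial>lborel) \<le> C"
proof -
  let ?R = "real DIM('a)"
  have R1: "?R \<ge> 1" using DIM_positive by (simp add: Suc_le_eq)
  obtain K where K: "0 < K" "K < \<infinity>"
      "\<And>t0. (\<integral>\<^sup>+t. indicator {-?R..?R} t * ennreal (\<bar>t - t0\<bar> powr a) \<partial>lborel) \<le> K"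
    using nn_integral_abs_powr_shift_bounded[OF a R1] by blast
  define C where "C = ennreal ?R * (face_integral DIM('a) ?R b * K * (face_integral DIM('a) ?R c * K))"
  have "C < \<infinity>"
    unfolding C_def using face_integral_finite[OF b] face_integral_finite[OF c] K(2)
    by (simp add: ennreal_mult_less_top)
  moreover have "(\<integral>\<^sup>+y. \<integral>\<^sup>+z. indicator (cube 1) y * indicator (cube 1) z * abs_kernel a b c (x, y, z)
      \<partial>lborel \<partial>lborel) \<le> C" if x: "norm x = 1" for x :: 'a
  proof -
    obtain j where j: "j \<in> Basis" "(x \<bullet> j)\<^sup>2 \<ge> 1 / ?R"
      using exists_Basis_inner_sq_ge[OF x] by blast
    have xj: "x \<bullet> j \<noteq> 0" using j(2) R1 by auto
    obtain k where k: "k \<in> Basis" "k \<noteq> j" using exists_Basis_neq[OF dim j(1)] by blast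
    define d where "d = ennreal (1 / \<bar>x \<bullet> j\<bar>)"
    define T where "T y = abs_powr_top a (y \<bullet> shear x j k)" for y
    have [measurable]: "T \<in> borel_measurable borel" unfolding T_def by measurable
    have inner: "(\<integral>\<^sup>+z. indicator (cube 1) y * indicator (cube 1) z * abs_kernel a b c (x, y, z) \<partial>lborel)
        \<le> (d * face_integral DIM('a) ?R b * K) * (indicator (cube 1) y * (ennreal (\<bar>x \<bullet> y\<bar> powr c) * T y))" for y
    proof -
      have "(\<integral>\<^sup>+z. indicator (cube 1) y * indicator (cube 1) z * abs_kernel a b c (x, y, z) \<partial>lborel)
          = (\<integral>\<^sup>+z. (indicator (cube 1) y * ennreal (\<bar>x \<bullet> y\<bar> powr c))
            * (indicator (cube 1) z * ennreal (\<bar>y \<bullet> z\<bar> powr a) * ennreal (\<bar>z \<bullet> x\<bar> powr b)) \<partial>lborel)"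
        by (simp add: mult_ac)
      also have "\<dots> = indicator (cube 1) y * ennreal (\<bar>x \<bullet> y\<bar> powr c) *
          (\<integral>\<^sup>+z. indicator (cube 1) z * ennreal (\<bar>y \<bullet> z\<bar> powr a) * ennreal (\<bar>z \<bullet> x\<bar> powr b) \<partial>lborel)"
        by (rule nn_integral_cmult) measurable
      also have "\<dots> \<le> indicator (cube 1) y * ennreal (\<bar>x \<bullet> y\<bar> powr c) * (d * (face_integral DIM('a) ?R b * (T y * K)))"
        unfolding d_def T_def by (intro mult_left_mono nn_integral_cube_inner_powr_le[OF x j(1) xj k K(1,3)]) simp
      finally show ?thesis by (simp add: mult_ac)
    qed
    have "(\<integral>\<^sup>+y. \<integral>\<^sup>+z. indicator (cube 1) y * indicator (cube 1) z * abs_kernel a b c (x, y, z)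
        \<partial>lborel \<partial>lborel)
      \<le> (\<integral>\<^sup>+y. (d * face_integral DIM('a) ?R b * K) * (indicator (cube 1) y * (ennreal (\<bar>x \<bullet> y\<bar> powr c) * T y))
        \<partial>lborel)"
      by (intro nn_integral_mono inner)
    also have "\<dots> = (d * face_integral DIM('a) ?R b * K)
        * (\<integral>\<^sup>+y. indicator (cube 1) y * (ennreal (\<bar>x \<bullet> y\<bar> powr c) * T y) \<partial>lborel)"
      by (rule nn_integral_cmult) measurable
    also have "\<dots> \<le> (d * face_integral DIM('a) ?R b * K) * (d * (face_integral DIM('a) ?R c * K))"
      unfolding d_def T_def
      by (intro mult_left_mono nn_integral_cube_outer_powr_le[OF x j(1) xj k a(2) K(1,3)]) simp
    also have "\<dots> = (d * d) * (face_integral DIM('a) ?R b * K * (face_integral DIM('a) ?R c * K))"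
      by (simp add: mult_ac)
    also have "\<dots> \<le> C"
    proof -
      have "1 / (x \<bullet> j)\<^sup>2 \<le> ?R" using j(2) xj R1 by (simp add: field_simps)
      then have "d * d \<le> ennreal ?R"
        unfolding d_def by (simp add: ennreal_mult'[symmetric] power2_eq_square ennreal_leI)
      then show ?thesis unfolding C_def by (rule mult_right_mono) simp
    qed
    finally show ?thesis .
  qed
  ultimately show ?thesis using that by blast
qed

section \<open>The sphere measure\<close>

lemma sgn_eq_inverse_norm_scaleR: "sgn y = (1 / norm y) *\<^sub>R y"
  by (simp add: sgn_div_norm divide_inverse_commute)

definition punctured_unit_ball :: "'a::real_normed_vector set" where
  "punctured_unit_ball = ball 0 1 - {0}"

lemma sets_punctured_unit_ball [measurable]: "punctured_unit_ball \<in> sets borel"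
  by (simp add: punctured_unit_ball_def)

lemma emeasure_punctured_unit_ball_finite:
  "emeasure lborel (punctured_unit_ball :: 'a::euclidean_space set) < \<infinity>"
proof -
  have "emeasure lborel (punctured_unit_ball :: 'a set) \<le> emeasure lborel (ball (0::'a) 1)"
    by (rule emeasure_mono) (auto simp: punctured_unit_ball_def)
  then show ?thesis using emeasure_lborel_ball_finite[of "0::'a" 1] by (simp add: order_le_less_trans)
qed

lemma sets_sphere_measure:
  "sets (sphere_measure :: (real^'n) measure) = sets (restrict_space borel (sphere 0 1))"
  unfolding sphere_measure_def by simp

lemma nn_integral_sphere_measure:
  fixes f :: "real^'n \<Rightarrow> ennreal"
  assumes f[measurable]: "f \<in> borel_measurable borel"
  shows "(\<integral>\<^sup>+x. f x \<partial>sphere_measure)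
    = ennreal (real CARD('n)) * (\<integral>\<^sup>+y. indicator punctured_unit_ball y * f (sgn y) \<partial>lborel)"
proof -
  let ?B = "(punctured_unit_ball :: (real^'n) set)"
  have sgn_measurable: "sgn \<in> measurable (restrict_space lborel ?B) (restrict_space borel (sphere 0 1))"
    by (rule measurable_restrict_space3) (auto simp: norm_sgn punctured_unit_ball_def)
  have [measurable]: "(\<lambda>x. ennreal (real CARD('n)) * f x) \<in> borel_measurable (restrict_space borel (sphere 0 1))"
    by (rule measurable_restrict_space1) measurable
  have "(\<integral>\<^sup>+x. f x \<partial>sphere_measure) = (\<integral>\<^sup>+x. ennreal (real CARD('n)) * f x
      \<partial>distr (restrict_space lborel ?B) (restrict_space borel (sphere 0 1)) sgn)"
    unfolding sphere_measure_def sgn_eq_inverse_norm_scaleR[abs_def, symmetric] punctured_unit_ball_def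
    by (rule nn_integral_density) (auto intro: measurable_restrict_space1)
  also have "\<dots> = (\<integral>\<^sup>+y. ennreal (real CARD('n)) * f (sgn y) \<partial>restrict_space lborel ?B)"
    by (rule nn_integral_distr[OF sgn_measurable]) measurable
  also have "\<dots> = (\<integral>\<^sup>+y. ennreal (real CARD('n)) * (indicator ?B y * f (sgn y)) \<partial>lborel)"
    by (subst nn_integral_restrict_space) (auto simp: mult_ac intro!: nn_integral_cong)
  also have "\<dots> = ennreal (real CARD('n)) * (\<integral>\<^sup>+y. indicator ?B y * f (sgn y) \<partial>lborel)"
    by (rule nn_integral_cmult) measurable
  finally show ?thesis .
qed

lemma finite_measure_sphere_measure: "finite_measure (sphere_measure :: (real^'n) measure)"
proof (rule finite_measureI)
  have "emeasure (sphere_measure :: (real^'n) measure) (space sphere_measure)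
      = (\<integral>\<^sup>+x. 1 \<partial>(sphere_measure :: (real^'n) measure))"
    by simp
  also have "\<dots> = ennreal (real CARD('n)) * emeasure lborel (punctured_unit_ball :: (real^'n) set)"
    by (subst nn_integral_sphere_measure) simp_all
  also have "\<dots> < \<infinity>"
    using emeasure_punctured_unit_ball_finite[where 'a = "real^'n"] by (simp add: ennreal_mult_less_top)
  finally show "emeasure (sphere_measure :: (real^'n) measure) (space sphere_measure) \<noteq> \<infinity>" by simp
qed

lemma measurable_sphere_measure_id:
  "(\<lambda>x. x) \<in> measurable (sphere_measure :: (real^'n) measure) borel"
  unfolding measurable_cong_sets[OF sets_sphere_measure refl]
  by (rule measurable_restrict_space1) simp

interpretation sphere: finite_measure "sphere_measure :: (real^'n) measure"
  by (rule finite_measure_sphere_measure)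

interpretation sphere_pair: pair_sigma_finite "sphere_measure :: (real^'n) measure" "sphere_measure :: (real^'n) measure"
  by (intro pair_sigma_finite.intro sphere.sigma_finite_measure_axioms)

lemma measurable_sphere_measure3:
  assumes "F \<in> borel_measurable (borel \<Otimes>\<^sub>M borel \<Otimes>\<^sub>M borel)"
  shows "F \<in> borel_measurable (sphere_measure \<Otimes>\<^sub>M sphere_measure \<Otimes>\<^sub>M (sphere_measure :: (real^'n) measure))"
proof -
  note measurable_sphere_measure_id[measurable]
  have "(\<lambda>(x, y, z). (x, y, z)) \<in> measurable (sphere_measure \<Otimes>\<^sub>M sphere_measure \<Otimes>\<^sub>M (sphere_measure :: (real^'n) measure))
      (borel \<Otimes>\<^sub>M borel \<Otimes>\<^sub>M borel)"
    by measurable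
  from measurable_compose[OF this assms] show ?thesis by (simp add: split_beta')
qed

definition sphere_integral3 :: "((real^'n) \<times> (real^'n) \<times> (real^'n) \<Rightarrow> ennreal) \<Rightarrow> ennreal" where
  "sphere_integral3 F = (\<integral>\<^sup>+x. \<integral>\<^sup>+y. \<integral>\<^sup>+z. F (x, y, z) \<partial>sphere_measure \<partial>sphere_measure \<partial>sphere_measure)"

lemma nn_integral_sphere_measure3:
  fixes F :: "(real^'n) \<times> (real^'n) \<times> (real^'n) \<Rightarrow> ennreal"
  assumes F[measurable]: "F \<in> borel_measurable (borel \<Otimes>\<^sub>M borel \<Otimes>\<^sub>M borel)"
  shows "(\<integral>\<^sup>+p. F p \<partial>(sphere_measure \<Otimes>\<^sub>M sphere_measure \<Otimes>\<^sub>M sphere_measure)) = sphere_integral3 F"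
proof -
  note measurable_sphere_measure_id[measurable]
  interpret pair: sigma_finite_measure "sphere_measure \<Otimes>\<^sub>M (sphere_measure :: (real^'n) measure)"
    by (intro sigma_finite_pair_measure sphere.sigma_finite_measure_axioms)
  have "(\<integral>\<^sup>+p. F p \<partial>(sphere_measure \<Otimes>\<^sub>M sphere_measure \<Otimes>\<^sub>M sphere_measure))
      = (\<integral>\<^sup>+x. \<integral>\<^sup>+q. F (x, q) \<partial>(sphere_measure \<Otimes>\<^sub>M sphere_measure) \<partial>sphere_measure)"
    by (rule pair.nn_integral_fst[symmetric]) (rule measurable_sphere_measure3[OF F])
  also have "\<dots> = sphere_integral3 F"
    unfolding sphere_integral3_def
  proof (rule nn_integral_cong)
    fix x :: "real^'n"
    have "(\<lambda>(y, z). F (x, y, z)) \<in> borel_measurable (sphere_measure \<Otimes>\<^sub>M sphere_measure)"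
      by measurable
    moreover have "(\<lambda>(y, z). F (x, y, z)) = (\<lambda>q. F (x, q))" by auto
    ultimately show "(\<integral>\<^sup>+q. F (x, q) \<partial>(sphere_measure \<Otimes>\<^sub>M sphere_measure))
        = (\<integral>\<^sup>+y. \<integral>\<^sup>+z. F (x, y, z) \<partial>sphere_measure \<partial>sphere_measure)"
      using sphere.nn_integral_fst[of "\<lambda>(y, z). F (x, y, z)"] by simp
  qed
  finally show ?thesis .
qed

lemma sphere_integral3_swap23:
  fixes F :: "(real^'n) \<times> (real^'n) \<times> (real^'n) \<Rightarrow> ennreal"
  assumes F[measurable]: "F \<in> borel_measurable (borel \<Otimes>\<^sub>M borel \<Otimes>\<^sub>M borel)"
  shows "sphere_integral3 F = sphere_integral3 (\<lambda>(x, y, z). F (x, z, y))"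
  unfolding sphere_integral3_def
proof (rule nn_integral_cong)
  note measurable_sphere_measure_id[measurable]
  fix x :: "real^'n"
  have "(\<lambda>(y, z). F (x, y, z)) \<in> borel_measurable (sphere_measure \<Otimes>\<^sub>M sphere_measure)"
    by measurable
  then show "(\<integral>\<^sup>+y. \<integral>\<^sup>+z. F (x, y, z) \<partial>sphere_measure \<partial>sphere_measure)
      = (\<integral>\<^sup>+y. \<integral>\<^sup>+z. (\<lambda>(x, y, z). F (x, z, y)) (x, y, z) \<partial>sphere_measure \<partial>sphere_measure)"
    using sphere_pair.Fubini'[of "\<lambda>y z. F (x, y, z)"] by simp
qed

lemma sphere_integral3_swap12:
  fixes F :: "(real^'n) \<times> (real^'n) \<times> (real^'n) \<Rightarrow> ennreal"
  assumes F[measurable]: "F \<in> borel_measurable (borel \<Otimes>\<^sub>M borel \<Otimes>\<^sub>M borel)"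
  shows "sphere_integral3 F = sphere_integral3 (\<lambda>(x, y, z). F (y, x, z))"
proof -
  note measurable_sphere_measure_id[measurable]
  have "(\<lambda>(x, y). \<integral>\<^sup>+z. F (x, y, z) \<partial>sphere_measure) \<in> borel_measurable (sphere_measure \<Otimes>\<^sub>M sphere_measure)"
    by measurable
  then show ?thesis
    unfolding sphere_integral3_def using sphere_pair.Fubini'[of "\<lambda>x y. \<integral>\<^sup>+z. F (x, y, z) \<partial>sphere_measure"]
    by simp
qed

lemma sphere_integral3_eq_cone:
  fixes F :: "(real^'n) \<times> (real^'n) \<times> (real^'n) \<Rightarrow> ennreal"
  assumes F[measurable]: "F \<in> borel_measurable (borel \<Otimes>\<^sub>M borel \<Otimes>\<^sub>M borel)"
  shows "sphere_integral3 F = ennreal (real CARD('n)) ^ 3 *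
    (\<integral>\<^sup>+x. indicator punctured_unit_ball x * (\<integral>\<^sup>+y. indicator punctured_unit_ball y *
      (\<integral>\<^sup>+z. indicator punctured_unit_ball z * F (sgn x, sgn y, sgn z) \<partial>lborel) \<partial>lborel) \<partial>lborel)"
proof -
  note measurable_sphere_measure_id[measurable]
  let ?N = "ennreal (real CARD('n))" and ?B = "(punctured_unit_ball :: (real^'n) set)"
  define G where "G x y = (\<integral>\<^sup>+z. indicator ?B z * F (x, y, sgn z) \<partial>lborel)" for x y
  define H where "H x = (\<integral>\<^sup>+y. indicator ?B y * G x (sgn y) \<partial>lborel)" for x
  have [measurable]: "G x \<in> borel_measurable borel" "H \<in> borel_measurable borel" for x
    unfolding G_def H_def by measurable
  have "(\<integral>\<^sup>+y. \<integral>\<^sup>+z. F (x, y, z) \<partial>sphere_measure \<partial>sphere_measure) = ?N * (?N * H x)" for x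
  proof -
    have "(\<integral>\<^sup>+y. \<integral>\<^sup>+z. F (x, y, z) \<partial>sphere_measure \<partial>sphere_measure) = (\<integral>\<^sup>+y. ?N * G x y \<partial>sphere_measure)"
      unfolding G_def by (intro nn_integral_cong nn_integral_sphere_measure) measurable
    also have "\<dots> = ?N * (\<integral>\<^sup>+y. G x y \<partial>sphere_measure)"
      by (rule nn_integral_cmult) measurable
    also have "(\<integral>\<^sup>+y. G x y \<partial>sphere_measure) = ?N * H x"
      unfolding H_def by (rule nn_integral_sphere_measure) measurable
    finally show ?thesis .
  qed
  then have "sphere_integral3 F = (\<integral>\<^sup>+x. ?N * (?N * H x) \<partial>sphere_measure)"
    unfolding sphere_integral3_def by simp
  also have "\<dots> = ?N * (?N * (\<integral>\<^sup>+x. H x \<partial>sphere_measure))"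
    by (simp add: nn_integral_cmult)
  also have "(\<integral>\<^sup>+x. H x \<partial>sphere_measure) = ?N * (\<integral>\<^sup>+x. indicator ?B x * H (sgn x) \<partial>lborel)"
    by (rule nn_integral_sphere_measure) measurable
  finally show ?thesis
    by (simp add: H_def G_def power3_eq_cube mult_ac)
qed

section \<open>Convergence\<close>

lemma powr_le_powr_min_0:
  fixes s a :: real
  assumes "0 \<le> s" "s \<le> 1"
  shows "s powr a \<le> s powr (min a 0)"
proof (cases "a \<le> 0")
  case False
  have "s powr a \<le> 1 powr a" using assms False by (intro powr_mono2) auto
  then show ?thesis using False assms by (cases "s = 0") (auto simp: min_def)
qed (simp add: min_def)

lemma abs_inner_sgn_powr_le:
  fixes v w :: "'a::real_inner"
  assumes v: "v \<noteq> 0" "norm v \<le> 1" and w: "w \<noteq> 0" "norm w \<le> 1"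
  shows "\<bar>sgn v \<bullet> sgn w\<bar> powr a \<le> \<bar>v \<bullet> w\<bar> powr (min a 0)"
proof -
  have nvw: "0 < norm v * norm w" "norm v * norm w \<le> 1"
    using v w by (auto intro: mult_le_one)
  have eq: "\<bar>sgn v \<bullet> sgn w\<bar> = \<bar>v \<bullet> w\<bar> / (norm v * norm w)"
    using v w by (simp add: sgn_div_norm abs_mult field_simps)
  have "\<bar>sgn v \<bullet> sgn w\<bar> \<le> 1"
    using Cauchy_Schwarz_ineq2[of "sgn v" "sgn w"] v w by (simp add: norm_sgn)
  then have "\<bar>sgn v \<bullet> sgn w\<bar> powr a \<le> \<bar>sgn v \<bullet> sgn w\<bar> powr (min a 0)"
    by (intro powr_le_powr_min_0) auto
  also have "\<dots> \<le> \<bar>v \<bullet> w\<bar> powr (min a 0)"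
  proof (cases "v \<bullet> w = 0")
    case False
    have "\<bar>v \<bullet> w\<bar> \<le> \<bar>v \<bullet> w\<bar> / (norm v * norm w)"
      using nvw by (simp add: le_divide_eq mult_left_le)
    then show ?thesis unfolding eq using False by (intro powr_mono2') auto
  qed (simp add: eq)
  finally show ?thesis .
qed

lemma abs_kernel_sgn_le:
  fixes u y z :: "'a::real_inner"
  assumes u: "norm u = 1" and y: "y \<in> punctured_unit_ball" and z: "z \<in> punctured_unit_ball"
  shows "abs_kernel a b c (u, sgn y, sgn z) \<le> abs_kernel (min a 0) (min b 0) (min c 0) (u, y, z)"
proof -
  have yz: "y \<noteq> 0" "norm y \<le> 1" "z \<noteq> 0" "norm z \<le> 1" "u \<noteq> 0"
    using y z u by (auto simp: punctured_unit_ball_def)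
  have "sgn u = u" using u by (simp add: sgn_div_norm)
  then have "\<bar>sgn z \<bullet> u\<bar> powr b \<le> \<bar>z \<bullet> u\<bar> powr (min b 0)" "\<bar>u \<bullet> sgn y\<bar> powr c \<le> \<bar>u \<bullet> y\<bar> powr (min c 0)"
    using abs_inner_sgn_powr_le[of z u b] abs_inner_sgn_powr_le[of u y c] yz u by auto
  moreover have "\<bar>sgn y \<bullet> sgn z\<bar> powr a \<le> \<bar>y \<bullet> z\<bar> powr (min a 0)"
    using abs_inner_sgn_powr_le[of y z a] yz by auto
  ultimately show ?thesis
    by (auto intro!: mult_mono ennreal_leI)
qed

lemma punctured_unit_ball_subset_cube: "punctured_unit_ball \<subseteq> (cube 1 :: 'a::euclidean_space set)"
proof
  fix y :: 'a assume y: "y \<in> punctured_unit_ball"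
  show "y \<in> cube 1"
    unfolding mem_cube
  proof
    fix i :: 'a assume "i \<in> Basis"
    then have "\<bar>y \<bullet> i\<bar> \<le> norm y" by (rule Basis_le_norm)
    then show "\<bar>y \<bullet> i\<bar> \<le> 1" using y by (simp add: punctured_unit_ball_def)
  qed
qed

lemma nn_integral_abs_kernel_sgn_le_cube:
  fixes u :: "'a::euclidean_space"
  assumes u: "norm u = 1"
  shows "(\<integral>\<^sup>+y. indicator punctured_unit_ball y *
      (\<integral>\<^sup>+z. indicator punctured_unit_ball z * abs_kernel a b c (u, sgn y, sgn z) \<partial>lborel) \<partial>lborel)
    \<le> (\<integral>\<^sup>+y. \<integral>\<^sup>+z. indicator (cube 1) y * indicator (cube 1) z
      * abs_kernel (min a 0) (min b 0) (min c 0) (u, y, z) \<partial>lborel \<partial>lborel)"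
proof (intro nn_integral_mono)
  fix y :: 'a
  show "indicator punctured_unit_ball y * (\<integral>\<^sup>+z. indicator punctured_unit_ball z * abs_kernel a b c (u, sgn y, sgn z) \<partial>lborel)
      \<le> (\<integral>\<^sup>+z. indicator (cube 1) y * indicator (cube 1) z * abs_kernel (min a 0) (min b 0) (min c 0) (u, y, z) \<partial>lborel)"
  proof (cases "y \<in> punctured_unit_ball")
    case y: True
    have "indicator punctured_unit_ball z * abs_kernel a b c (u, sgn y, sgn z)
        \<le> indicator (cube 1) y * indicator (cube 1) z * abs_kernel (min a 0) (min b 0) (min c 0) (u, y, z)" for z
      using y abs_kernel_sgn_le[OF u y, of z a b c]
      by (cases "z \<in> punctured_unit_ball")
        (auto simp: subsetD[OF punctured_unit_ball_subset_cube] simp del: abs_kernel_apply)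
    then show ?thesis using y by (simp add: nn_integral_mono)
  qed simp
qed

lemma sphere_integral3_abs_kernel_finite:
  fixes a b c :: real
  assumes n2: "CARD('n::finite) \<ge> 2" and a: "-1 < a" and b: "-1 < b" and c: "-1 < c"
  shows "sphere_integral3 (abs_kernel a b c :: (real^'n) \<times> (real^'n) \<times> (real^'n) \<Rightarrow> ennreal) < \<infinity>"
proof -
  let ?B = "punctured_unit_ball :: (real^'n) set"
  have dim: "DIM(real^'n) \<ge> 2" using n2 by simp
  obtain C where C: "C < \<infinity>" "\<And>x::real^'n. norm x = 1 \<Longrightarrow> (\<integral>\<^sup>+y. \<integral>\<^sup>+z. indicator (cube 1) y * indicator (cube 1) z
      * abs_kernel (min a 0) (min b 0) (min c 0) (x, y, z) \<partial>lborel \<partial>lborel) \<le> C"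
    using cube_abs_kernel_integral_bounded[OF dim, of "min a 0" "min b 0" "min c 0"] a b c by auto
  have "(\<integral>\<^sup>+y. indicator ?B y * (\<integral>\<^sup>+z. indicator ?B z * abs_kernel a b c (sgn x, sgn y, sgn z)
      \<partial>lborel) \<partial>lborel) \<le> C" if "x \<in> ?B" for x
  proof -
    have u: "norm (sgn x) = 1" using that by (simp add: norm_sgn punctured_unit_ball_def)
    show ?thesis using nn_integral_abs_kernel_sgn_le_cube[OF u] C(2)[OF u] by (rule order_trans)
  qed
  then have "(\<integral>\<^sup>+x. indicator ?B x * (\<integral>\<^sup>+y. indicator ?B y * (\<integral>\<^sup>+z. indicator ?B z
      * abs_kernel a b c (sgn x, sgn y, sgn z) \<partial>lborel) \<partial>lborel) \<partial>lborel)
    \<le> (\<integral>\<^sup>+x. C * indicator ?B x \<partial>lborel)"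
    by (intro nn_integral_mono) (auto simp: indicator_def)
  also have "\<dots> = C * emeasure lborel ?B"
    by (rule nn_integral_cmult_indicator) simp
  also have "\<dots> < \<infinity>"
    using C(1) emeasure_punctured_unit_ball_finite[where 'a = "real^'n"] by (simp add: ennreal_mult_less_top)
  finally show ?thesis
    by (subst sphere_integral3_eq_cone) (simp_all add: ennreal_mult_less_top power_less_top_ennreal)
qed

section \<open>Divergence\<close>

lemma inner_perturb:
  fixes v w p q :: "'a::real_inner"
  shows "\<bar>v \<bullet> w - p \<bullet> q\<bar> \<le> norm (v - p) * norm w + norm p * norm (w - q)"
proof -
  have "v \<bullet> w - p \<bullet> q = (v - p) \<bullet> w + p \<bullet> (w - q)" by (simp add: algebra_simps)
  then have "\<bar>v \<bullet> w - p \<bullet> q\<bar> \<le> \<bar>(v - p) \<bullet> w\<bar> + \<bar>p \<bullet> (w - q)\<bar>" by simp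
  also have "\<dots> \<le> norm (v - p) * norm w + norm p * norm (w - q)"
    by (intro add_mono Cauchy_Schwarz_ineq2)
  finally show ?thesis .
qed

lemma abs_inner_sgn: "\<bar>sgn v \<bullet> sgn w\<bar> = \<bar>v \<bullet> w\<bar> / (norm v * norm w)"
  by (cases "v = 0 \<or> w = 0") (auto simp: sgn_div_norm abs_mult field_simps)

lemma nn_integral_abs_Basis_powr_diverges:
  fixes w0 e :: "'a::euclidean_space"
  assumes a: "a \<le> -1" and e: "e \<in> Basis" and w0: "w0 \<bullet> e = 0" and r: "r > 0"
  shows "(\<integral>\<^sup>+w. indicator (ball w0 r) w * ennreal (\<bar>w \<bullet> e\<bar> powr a) \<partial>lborel) = \<infinity>"
proof -
  interpret product_sigma_finite "\<lambda>_::'a. lborel :: real measure" by standard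
  have [measurable]: "ball w0 r \<in> sets borel" by simp
  define \<delta> where "\<delta> = r / (2 * DIM('a))"
  have \<delta>: "0 < \<delta>" "real DIM('a) * \<delta> < r"
    using r DIM_positive[where 'a='a] by (auto simp: \<delta>_def field_simps)
  define S where "S \<omega> = (\<Sum>c\<in>Basis-{e}. \<omega> c *\<^sub>R c)" for \<omega> :: "'a \<Rightarrow> real"
  define W where "W = Pi\<^sub>E (Basis-{e}) (\<lambda>c. {w0 \<bullet> c - \<delta> .. w0 \<bullet> c + \<delta>})"
  have line_in_ball: "t *\<^sub>R e + S \<omega> \<in> ball w0 r" if \<omega>: "\<omega> \<in> W" and t: "\<bar>t\<bar> \<le> \<delta>" for \<omega> t
  proof -
    have coords: "\<bar>(t *\<^sub>R e + S \<omega> - w0) \<bullet> i\<bar> \<le> \<delta>" if i: "i \<in> Basis" for i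
    proof (cases "i = e")
      case False
      then have "\<omega> i \<in> {w0 \<bullet> i - \<delta> .. w0 \<bullet> i + \<delta>}" using PiE_mem[OF \<omega>[unfolded W_def]] i by auto
      then show ?thesis using e i False by (auto simp: S_def inner_diff_left inner_split_Basis)
    qed (use e t w0 in \<open>simp add: S_def inner_diff_left inner_split_Basis\<close>)
    have "norm (t *\<^sub>R e + S \<omega> - w0) \<le> (\<Sum>i\<in>Basis. \<bar>(t *\<^sub>R e + S \<omega> - w0) \<bullet> i\<bar>)"
      by (rule norm_le_l1)
    also have "\<dots> \<le> (\<Sum>i\<in>(Basis::'a set). \<delta>)" using coords by (rule sum_mono)
    also have "\<dots> < r" using \<delta>(2) by simp
    finally show ?thesis by (simp add: dist_norm norm_minus_commute)
  qed
  have line_integral: "(\<integral>\<^sup>+t. indicator (ball w0 r) (t *\<^sub>R e + S \<omega>) * ennreal (\<bar>t\<bar> powr a) \<partial>lborel) = \<infinity>"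
    if \<omega>: "\<omega> \<in> W" for \<omega>
  proof -
    have "\<infinity> = (\<integral>\<^sup>+t. indicator {-\<delta>..\<delta>} t * ennreal (\<bar>t\<bar> powr a) \<partial>lborel)"
      using nn_integral_abs_powr_diverges[OF a \<delta>(1)] by simp
    also have "\<dots> \<le> (\<integral>\<^sup>+t. indicator (ball w0 r) (t *\<^sub>R e + S \<omega>) * ennreal (\<bar>t\<bar> powr a) \<partial>lborel)"
      using line_in_ball[OF \<omega>] by (intro nn_integral_mono) (auto simp: indicator_def abs_le_iff)
    finally show ?thesis by (simp add: top_unique)
  qed
  have "(\<integral>\<^sup>+w. indicator (ball w0 r) w * ennreal (\<bar>w \<bullet> e\<bar> powr a) \<partial>lborel)
      = (\<integral>\<^sup>+\<omega>. (\<integral>\<^sup>+t. indicator (ball w0 r) (t *\<^sub>R e + S \<omega>) * ennreal (\<bar>(t *\<^sub>R e + S \<omega>) \<bullet> e\<bar> powr a)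
          \<partial>lborel) \<partial>(Pi\<^sub>M (Basis-{e}) (\<lambda>_. lborel)))"
    unfolding S_def by (rule nn_integral_lborel_split_Basis[OF e]) measurable
  also have "\<dots> = \<infinity>"
  proof (rule nn_integral_eq_top_of_top_on)
    show "W \<in> sets (Pi\<^sub>M (Basis-{e}) (\<lambda>_. lborel))"
      unfolding W_def by (intro sets_PiM_I_finite) auto
    have "emeasure (Pi\<^sub>M (Basis-{e}) (\<lambda>_. lborel)) W = (\<Prod>c\<in>Basis-{e}. emeasure lborel {w0 \<bullet> c - \<delta> .. w0 \<bullet> c + \<delta>})"
      unfolding W_def by (rule emeasure_PiM) auto
    then show "emeasure (Pi\<^sub>M (Basis-{e}) (\<lambda>_. lborel)) W \<noteq> 0"
      using \<delta> by simp
    show "(\<integral>\<^sup>+t. indicator (ball w0 r) (t *\<^sub>R e + S \<omega>) * ennreal (\<bar>(t *\<^sub>R e + S \<omega>) \<bullet> e\<bar> powr a) \<partial>lborel) = \<infinity>"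
      if "\<omega> \<in> W" for \<omega>
      using line_integral[OF that] e by (simp add: S_def inner_split_Basis)
  qed
  finally show ?thesis .
qed

text \<open>The shear \<open>shear y e\<close> maps the coordinate hyperplane \<open>w \<bullet> e = 0\<close> onto \<open>y\<^sup>\<bottom>\<close>.\<close>

lemma nn_integral_abs_inner_powr_diverges:
  fixes y z0 :: "'a::euclidean_space"
  assumes a: "a \<le> -1" and y: "y \<noteq> 0" and yz0: "y \<bullet> z0 = 0" and r: "r > 0"
  shows "(\<integral>\<^sup>+z. indicator (ball z0 r) z * ennreal (\<bar>y \<bullet> z\<bar> powr a) \<partial>lborel) = \<infinity>"
proof -
  obtain e where e: "e \<in> Basis" "y \<bullet> e \<noteq> 0"
    using y euclidean_all_zero_iff[of y] by blast
  have [measurable]: "ball z0 r \<in> sets borel" by simp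
  let ?s = "shear y e"
  define w0 where "w0 = z0 - (z0 \<bullet> e) *\<^sub>R e"
  have w0: "?s w0 = z0" "w0 \<bullet> e = 0"
    using e yz0 by (simp_all add: w0_def shear_orthogonal inner_diff_left)
  obtain B where B: "B > 0" "\<And>v. norm (?s v) \<le> norm v * B"
    using bounded_linear.pos_bounded linear_shear[of y e] linear_conv_bounded_linear by blast
  have in_ball: "?s w \<in> ball z0 r" if "w \<in> ball w0 (r / B)" for w
  proof -
    have "?s (w - w0) = ?s w - z0"
      by (simp add: linear_diff[OF linear_shear] w0(1))
    then have "dist z0 (?s w) = norm (?s (w - w0))"
      by (simp add: dist_norm norm_minus_commute)
    also have "\<dots> \<le> norm (w - w0) * B" by (rule B(2))
    also have "\<dots> < r" using that B(1) by (simp add: dist_norm norm_minus_commute pos_less_divide_eq)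
    finally show ?thesis by simp
  qed
  have "\<infinity> = (\<integral>\<^sup>+w. indicator (ball w0 (r / B)) w * ennreal (\<bar>w \<bullet> e\<bar> powr a) \<partial>lborel)"
    using nn_integral_abs_Basis_powr_diverges[OF a e(1) w0(2)] r B(1) by simp
  also have "\<dots> \<le> (\<integral>\<^sup>+w. indicator (ball z0 r) (?s w) * ennreal (\<bar>y \<bullet> ?s w\<bar> powr a) \<partial>lborel)"
    using in_ball by (intro nn_integral_mono) (auto simp: indicator_def inner_shear[OF e(2)])
  also have "\<dots> = ennreal \<bar>y \<bullet> e\<bar> * (\<integral>\<^sup>+z. indicator (ball z0 r) z * ennreal (\<bar>y \<bullet> z\<bar> powr a) \<partial>lborel)"
    by (rule nn_integral_shear[OF e]) measurable
  finally show ?thesis by (simp add: top_unique ennreal_mult_eq_top_iff)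
qed

text \<open>A neighbourhood of \<open>(e\<^sub>1 + e\<^sub>2, e\<^sub>1, e\<^sub>2)\<close>, scaled into the unit ball, on which
  \<open>z \<bullet> x\<close> and \<open>x \<bullet> y\<close> stay away from \<open>0\<close> while \<open>y \<bullet> z\<close> may vanish.\<close>

lemma near_orthogonal_configuration:
  fixes e1 e2 x y z :: "'a::euclidean_space"
  assumes e1: "e1 \<in> Basis" and e2: "e2 \<in> Basis" "e2 \<noteq> e1"
    and x: "x \<in> cball ((9/20) *\<^sub>R (e1 + e2)) (1/20)"
    and y: "y \<in> cball ((13/20) *\<^sub>R e1) (1/200)"
    and z: "z \<in> cball ((13/20) *\<^sub>R e2) (1/20)"
  shows "x \<in> punctured_unit_ball" "y \<in> punctured_unit_ball" "z \<in> punctured_unit_ball"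
    and "1/5 \<le> z \<bullet> x" "1/5 \<le> x \<bullet> y" "1/4 \<le> norm y * norm z"
proof -
  define px where "px = (9/20) *\<^sub>R (e1 + e2)"
  define py where "py = (13/20) *\<^sub>R e1"
  define pz where "pz = (13/20) *\<^sub>R e2"
  have ee: "e1 \<bullet> e1 = 1" "e2 \<bullet> e2 = 1" "e1 \<bullet> e2 = 0" "e2 \<bullet> e1 = 0"
    using e1 e2 by (auto simp: inner_Basis)
  have sq: "(norm px)\<^sup>2 = 81/200"
    unfolding power2_norm_eq_inner px_def by (simp add: inner_add_left inner_add_right ee)
  have "3/5 \<le> norm px" by (rule power2_le_imp_le) (simp_all add: sq power_divide)
  moreover have "norm px \<le> 13/20" by (rule power2_le_imp_le) (simp_all add: sq power_divide)
  ultimately have npx: "3/5 \<le> norm px" "norm px \<le> 13/20" by simp_all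
  have npy: "norm py = 13/20" and npz: "norm pz = 13/20" using e1 e2 by (simp_all add: py_def pz_def)
  have pxpy: "px \<bullet> py = 117/400" and pxpz: "px \<bullet> pz = 117/400"
    by (simp_all add: px_def py_def pz_def inner_add_left ee)
  have dx: "norm (x - px) \<le> 1/20" and dy: "norm (y - py) \<le> 1/200" and dz: "norm (z - pz) \<le> 1/20"
    using x y z by (simp_all add: px_def py_def pz_def dist_norm norm_minus_commute)
  have near: "norm p - norm (v - p) \<le> norm v" "norm v \<le> norm p + norm (v - p)" for v p :: 'a
    using norm_triangle_ineq2[of p v] norm_triangle_ineq[of p "v - p"] by (auto simp: norm_minus_commute)
  have nx: "11/20 \<le> norm x" "norm x \<le> 7/10" using near[where v = x and p = px] dx npx by linarith+
  have ny: "129/200 \<le> norm y" "norm y \<le> 131/200" using near[where v = y and p = py] dy npy by linarith+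
  have nz: "3/5 \<le> norm z" "norm z \<le> 7/10" using near[where v = z and p = pz] dz npz by linarith+
  show "x \<in> punctured_unit_ball" "y \<in> punctured_unit_ball" "z \<in> punctured_unit_ball"
    using nx ny nz by (auto simp: punctured_unit_ball_def)
  have "\<bar>x \<bullet> y - px \<bullet> py\<bar> \<le> norm (x - px) * norm y + norm px * norm (y - py)" by (rule inner_perturb)
  moreover have "norm (x - px) * norm y \<le> 1/20 * (131/200)" using dx ny by (intro mult_mono) auto
  moreover have "norm px * norm (y - py) \<le> 13/20 * (1/200)" using npx dy by (intro mult_mono) auto
  ultimately show "1/5 \<le> x \<bullet> y" using pxpy by linarith
  have "\<bar>x \<bullet> z - px \<bullet> pz\<bar> \<le> norm (x - px) * norm z + norm px * norm (z - pz)" by (rule inner_perturb)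
  moreover have "norm (x - px) * norm z \<le> 1/20 * (7/10)" using dx nz by (intro mult_mono) auto
  moreover have "norm px * norm (z - pz) \<le> 13/20 * (1/20)" using npx dz by (intro mult_mono) auto
  ultimately show "1/5 \<le> z \<bullet> x" using pxpz by (simp add: inner_commute)
  have "(129/200) * (3/5) \<le> norm y * norm z" using ny nz by (intro mult_mono) auto
  then show "1/4 \<le> norm y * norm z" by simp
qed

lemma min_powr_le:
  fixes m s b :: real
  assumes "0 < m" "m \<le> s" "s \<le> 1"
  shows "min (m powr b) 1 \<le> s powr b"
proof (cases "b \<ge> 0")
  case True
  then have "m powr b \<le> s powr b" using assms by (intro powr_mono2) auto
  then show ?thesis by simp
next
  case False
  then have "1 powr b \<le> s powr b" using assms by (intro powr_mono2') auto
  then show ?thesis by simp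
qed

lemma abs_kernel_sgn_ge:
  fixes x y z :: "'a::real_inner"
  assumes a: "a \<le> 0" and nx: "norm x \<le> 1" and ny: "norm y \<le> 1" and nz: "norm z \<le> 1"
    and zx: "1/5 \<le> \<bar>z \<bullet> x\<bar>" and xy: "1/5 \<le> \<bar>x \<bullet> y\<bar>" and yz: "1/4 \<le> norm y * norm z"
  shows "ennreal (4 powr a * min ((1/5) powr b) 1 * min ((1/5) powr c) 1) * ennreal (\<bar>y \<bullet> z\<bar> powr a)
    \<le> abs_kernel a b c (sgn x, sgn y, sgn z)"
proof -
  have sgn_le_1: "\<bar>sgn v \<bullet> sgn w\<bar> \<le> 1" for v w :: 'a
    using Cauchy_Schwarz_ineq2[of "sgn v" "sgn w"] norm_sgn[of v] norm_sgn[of w]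
    by (auto split: if_splits)
  have ge: "\<bar>v \<bullet> w\<bar> \<le> \<bar>sgn v \<bullet> sgn w\<bar>" if "norm v \<le> 1" "norm w \<le> 1" for v w :: 'a
  proof (cases "v = 0 \<or> w = 0")
    case False
    then have "0 < norm v * norm w" "norm v * norm w \<le> 1" using that by (auto intro: mult_le_one)
    then show ?thesis unfolding abs_inner_sgn by (simp add: le_divide_eq mult_left_le)
  qed auto
  have "min ((1/5) powr b) 1 \<le> \<bar>sgn z \<bullet> sgn x\<bar> powr b"
    using ge[OF nz nx] zx sgn_le_1 by (intro min_powr_le) auto
  moreover have "min ((1/5) powr c) 1 \<le> \<bar>sgn x \<bullet> sgn y\<bar> powr c"
    using ge[OF nx ny] xy sgn_le_1 by (intro min_powr_le) auto
  moreover have "4 powr a * \<bar>y \<bullet> z\<bar> powr a \<le> \<bar>sgn y \<bullet> sgn z\<bar> powr a"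
  proof (cases "y \<bullet> z = 0")
    case False
    have pos: "0 < norm y * norm z" using yz by linarith
    have "\<bar>y \<bullet> z\<bar> * 1 \<le> \<bar>y \<bullet> z\<bar> * (4 * (norm y * norm z))"
      using yz by (intro mult_left_mono) auto
    then have "\<bar>sgn y \<bullet> sgn z\<bar> \<le> 4 * \<bar>y \<bullet> z\<bar>"
      unfolding abs_inner_sgn using pos by (simp add: pos_divide_le_eq mult_ac)
    moreover have "0 < \<bar>sgn y \<bullet> sgn z\<bar>"
      unfolding abs_inner_sgn using False yz by auto
    ultimately have "(4 * \<bar>y \<bullet> z\<bar>) powr a \<le> \<bar>sgn y \<bullet> sgn z\<bar> powr a"
      using a by (intro powr_mono2') auto
    then show ?thesis by (simp add: powr_mult)
  qed simp
  ultimately have "(4 powr a * \<bar>y \<bullet> z\<bar> powr a) * min ((1/5) powr b) 1 * min ((1/5) powr c) 1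
      \<le> \<bar>sgn y \<bullet> sgn z\<bar> powr a * \<bar>sgn z \<bullet> sgn x\<bar> powr b * \<bar>sgn x \<bullet> sgn y\<bar> powr c"
    by (intro mult_mono) auto
  then have "ennreal ((4 powr a * \<bar>y \<bullet> z\<bar> powr a) * min ((1/5) powr b) 1 * min ((1/5) powr c) 1)
      \<le> ennreal (\<bar>sgn y \<bullet> sgn z\<bar> powr a * \<bar>sgn z \<bullet> sgn x\<bar> powr b * \<bar>sgn x \<bullet> sgn y\<bar> powr c)"
    by (rule ennreal_leI)
  then show ?thesis by (simp add: ennreal_mult' mult_ac)
qed

lemma near_orthogonal_point:
  fixes e1 e2 y :: "'a::euclidean_space"
  assumes e1: "e1 \<in> Basis" and e2: "e2 \<in> Basis" "e2 \<noteq> e1"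
    and y: "y \<in> cball ((13/20) *\<^sub>R e1) (1/200)"
  obtains z0 where "y \<bullet> z0 = 0" "ball z0 (1/40) \<subseteq> cball ((13/20) *\<^sub>R e2) (1/20)"
proof -
  define py where "py = (13/20) *\<^sub>R e1"
  define pz where "pz = (13/20) *\<^sub>R e2"
  \<comment> \<open>the orthogonal projection of \<open>pz\<close> onto \<open>y\<^sup>\<bottom>\<close>\<close>
  define z0 where "z0 = pz - ((y \<bullet> pz) / (y \<bullet> y)) *\<^sub>R y"
  have dy: "norm (y - py) \<le> 1/200" using y by (simp add: py_def dist_norm norm_minus_commute)
  have ny: "129/200 \<le> norm y"
    using dy norm_triangle_ineq2[of py y] e1 by (simp add: py_def norm_minus_commute)
  then have "y \<noteq> 0" by auto
  then have "y \<bullet> z0 = 0" by (simp add: z0_def inner_diff_right)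
  moreover have "ball z0 (1/40) \<subseteq> cball pz (1/20)"
  proof
    fix z assume z: "z \<in> ball z0 (1/40)"
    have "\<bar>y \<bullet> pz\<bar> = \<bar>y \<bullet> pz - py \<bullet> pz\<bar>"
      using e1 e2 by (simp add: py_def pz_def inner_Basis)
    also have "\<dots> \<le> norm (y - py) * norm pz + norm py * norm (pz - pz)" by (rule inner_perturb)
    also have "\<dots> \<le> 1/200 * (13/20)" using dy e2 by (simp add: pz_def)
    finally have "\<bar>y \<bullet> pz\<bar> / norm y \<le> (13/4000) / (129/200)"
      using ny by (intro frac_le) auto
    moreover have "dist pz z0 = \<bar>y \<bullet> pz\<bar> / norm y"
      using \<open>y \<noteq> 0\<close> by (simp add: z0_def dist_norm dot_square_norm power2_eq_square)
    ultimately have "dist pz z \<le> 1/100 + 1/40"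
      using z dist_triangle[of pz z z0] by (simp add: dist_commute)
    then show "z \<in> cball pz (1/20)" by simp
  qed
  ultimately show ?thesis using that by (simp add: pz_def)
qed

lemma nn_integral_abs_kernel_sgn_diverges:
  fixes e1 e2 x y :: "'a::euclidean_space"
  assumes a: "a \<le> -1" and e1: "e1 \<in> Basis" and e2: "e2 \<in> Basis" "e2 \<noteq> e1"
    and x: "x \<in> cball ((9/20) *\<^sub>R (e1 + e2)) (1/20)" and y: "y \<in> cball ((13/20) *\<^sub>R e1) (1/200)"
  shows "(\<integral>\<^sup>+z. indicator punctured_unit_ball z * abs_kernel a b c (sgn x, sgn y, sgn z) \<partial>lborel) = \<infinity>"
proof -
  note config = near_orthogonal_configuration[OF e1 e2 x y]
  obtain z0 where z0: "y \<bullet> z0 = 0" "ball z0 (1/40) \<subseteq> cball ((13/20) *\<^sub>R e2) (1/20)"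
    using near_orthogonal_point[OF e1 e2 y] .
  have [measurable]: "ball z0 (1/40) \<in> sets borel" by simp
  have "y \<noteq> 0" using config(2)[of "(13/20) *\<^sub>R e2"] by (simp add: punctured_unit_ball_def)
  define \<kappa> where "\<kappa> = ennreal (4 powr a * min ((1/5) powr b) 1 * min ((1/5) powr c) 1)"
  have "\<kappa> \<noteq> 0" unfolding \<kappa>_def by (simp add: min_def)
  then have "\<infinity> = \<kappa> * (\<integral>\<^sup>+z. indicator (ball z0 (1/40)) z * ennreal (\<bar>y \<bullet> z\<bar> powr a) \<partial>lborel)"
    using nn_integral_abs_inner_powr_diverges[OF a \<open>y \<noteq> 0\<close> z0(1), of "1/40"] by simp
  also have "\<dots> = (\<integral>\<^sup>+z. \<kappa> * (indicator (ball z0 (1/40)) z * ennreal (\<bar>y \<bullet> z\<bar> powr a)) \<partial>lborel)"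
    by (rule nn_integral_cmult[symmetric]) measurable
  also have "\<dots> \<le> (\<integral>\<^sup>+z. indicator punctured_unit_ball z * abs_kernel a b c (sgn x, sgn y, sgn z) \<partial>lborel)"
  proof (rule nn_integral_mono)
    fix z :: 'a
    show "\<kappa> * (indicator (ball z0 (1/40)) z * ennreal (\<bar>y \<bullet> z\<bar> powr a))
        \<le> indicator punctured_unit_ball z * abs_kernel a b c (sgn x, sgn y, sgn z)"
    proof (cases "z \<in> ball z0 (1/40)")
      case True
      then have z: "z \<in> cball ((13/20) *\<^sub>R e2) (1/20)" using z0(2) by auto
      have "\<kappa> * ennreal (\<bar>y \<bullet> z\<bar> powr a) \<le> abs_kernel a b c (sgn x, sgn y, sgn z)"
        unfolding \<kappa>_def using config[OF z] a
        by (intro abs_kernel_sgn_ge) (auto simp: punctured_unit_ball_def)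
      then show ?thesis using True config(3)[OF z] by simp
    qed simp
  qed
  finally show ?thesis by (simp add: top_unique)
qed

lemma sphere_integral3_abs_kernel_infinite:
  fixes a b c :: real
  assumes n2: "CARD('n::finite) \<ge> 2" and a: "a \<le> -1"
  shows "sphere_integral3 (abs_kernel a b c :: (real^'n) \<times> (real^'n) \<times> (real^'n) \<Rightarrow> ennreal) = \<infinity>"
proof -
  let ?B = "punctured_unit_ball :: (real^'n) set"
  obtain e1 :: "real^'n" where e1: "e1 \<in> Basis" using nonempty_Basis by blast
  obtain e2 where e2: "e2 \<in> Basis" "e2 \<noteq> e1" using exists_Basis_neq[OF _ e1] n2 by auto
  define X where "X = cball ((9/20) *\<^sub>R (e1 + e2)) (1/20 :: real)"
  define Y where "Y = cball ((13/20) *\<^sub>R e1) (1/200 :: real)"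
  have centre: "(13/20) *\<^sub>R e1 \<in> Y" "(13/20) *\<^sub>R e2 \<in> cball ((13/20) *\<^sub>R e2) (1/20)"
    by (simp_all add: Y_def)
  note config = near_orthogonal_configuration[OF e1 e2, folded X_def Y_def]
  have y_integral: "(\<integral>\<^sup>+y. indicator ?B y * (\<integral>\<^sup>+z. indicator ?B z * abs_kernel a b c (sgn x, sgn y, sgn z)
      \<partial>lborel) \<partial>lborel) = \<infinity>" if x: "x \<in> X" for x
  proof (rule nn_integral_eq_top_of_top_on[of Y])
    show "Y \<in> sets lborel" "emeasure lborel Y \<noteq> 0"
      by (simp_all add: Y_def borel_closed emeasure_cball unit_ball_vol_pos[THEN less_imp_not_eq2])
    show "indicator ?B y * (\<integral>\<^sup>+z. indicator ?B z * abs_kernel a b c (sgn x, sgn y, sgn z) \<partial>lborel) = \<infinity>"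
      if y: "y \<in> Y" for y
      using nn_integral_abs_kernel_sgn_diverges[OF a e1 e2 x[unfolded X_def] y[unfolded Y_def]]
        config(2)[OF x y centre(2)] by simp
  qed
  have "(\<integral>\<^sup>+x. indicator ?B x * (\<integral>\<^sup>+y. indicator ?B y * (\<integral>\<^sup>+z. indicator ?B z
      * abs_kernel a b c (sgn x, sgn y, sgn z) \<partial>lborel) \<partial>lborel) \<partial>lborel) = \<infinity>"
  proof (rule nn_integral_eq_top_of_top_on[of X])
    show "X \<in> sets lborel" "emeasure lborel X \<noteq> 0"
      by (simp_all add: X_def borel_closed emeasure_cball unit_ball_vol_pos[THEN less_imp_not_eq2])
    show "indicator ?B x * (\<integral>\<^sup>+y. indicator ?B y * (\<integral>\<^sup>+z. indicator ?B z
        * abs_kernel a b c (sgn x, sgn y, sgn z) \<partial>lborel) \<partial>lborel) = \<infinity>" if x: "x \<in> X" for x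
      using y_integral[OF x] config(1)[OF x centre] by simp
  qed
  then show ?thesis
    by (subst sphere_integral3_eq_cone) (simp_all add: ennreal_mult_top)
qed

lemma sphere_integral3_abs_kernel_swap12:
  "sphere_integral3 (abs_kernel a b c :: (real^'n) \<times> (real^'n) \<times> (real^'n) \<Rightarrow> ennreal)
    = sphere_integral3 (abs_kernel b a c :: (real^'n) \<times> (real^'n) \<times> (real^'n) \<Rightarrow> ennreal)"
proof -
  have "sphere_integral3 (abs_kernel b a c :: (real^'n) \<times> (real^'n) \<times> (real^'n) \<Rightarrow> ennreal)
      = sphere_integral3 (\<lambda>(x :: real^'n, y, z). abs_kernel b a c (y, x, z))"
    by (rule sphere_integral3_swap12[OF borel_measurable_abs_kernel])
  also have "(\<lambda>(x, y, z). abs_kernel b a c (y, x, z)) = (abs_kernel a b c :: (real^'n) \<times> _ \<Rightarrow> _)"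
    by (auto simp: abs_kernel_def inner_commute mult_ac)
  finally show ?thesis by (rule sym)
qed

lemma sphere_integral3_abs_kernel_swap23:
  "sphere_integral3 (abs_kernel a b c :: (real^'n) \<times> (real^'n) \<times> (real^'n) \<Rightarrow> ennreal)
    = sphere_integral3 (abs_kernel a c b :: (real^'n) \<times> (real^'n) \<times> (real^'n) \<Rightarrow> ennreal)"
proof -
  have "sphere_integral3 (abs_kernel a c b :: (real^'n) \<times> (real^'n) \<times> (real^'n) \<Rightarrow> ennreal)
      = sphere_integral3 (\<lambda>(x :: real^'n, y, z). abs_kernel a c b (x, z, y))"
    by (rule sphere_integral3_swap23[OF borel_measurable_abs_kernel])
  also have "(\<lambda>(x, y, z). abs_kernel a c b (x, z, y)) = (abs_kernel a b c :: (real^'n) \<times> _ \<Rightarrow> _)"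
    by (auto simp: abs_kernel_def inner_commute mult_ac)
  finally show ?thesis by (rule sym)
qed

lemma sphere_integral3_abs_kernel_finite_iff:
  assumes "CARD('n::finite) \<ge> 2"
  shows "sphere_integral3 (abs_kernel a b c :: (real^'n) \<times> (real^'n) \<times> (real^'n) \<Rightarrow> ennreal) < \<infinity>
    \<longleftrightarrow> -1 < a \<and> -1 < b \<and> -1 < c"
proof
  assume finite: "sphere_integral3 (abs_kernel a b c :: (real^'n) \<times> _ \<Rightarrow> _) < \<infinity>"
  have "\<not> a \<le> -1"
    using finite sphere_integral3_abs_kernel_infinite[OF assms, of a b c] by auto
  moreover have "\<not> b \<le> -1"
    using finite sphere_integral3_abs_kernel_infinite[OF assms, of b a c]
    by (auto simp: sphere_integral3_abs_kernel_swap12[of a b c])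
  moreover have "\<not> c \<le> -1"
    using finite sphere_integral3_abs_kernel_infinite[OF assms, of c a b]
    by (auto simp: sphere_integral3_abs_kernel_swap23[of a b c] sphere_integral3_abs_kernel_swap12[of a c b])
  ultimately show "-1 < a \<and> -1 < b \<and> -1 < c" by auto
qed (use sphere_integral3_abs_kernel_finite[OF assms] in auto)

lemma powr_complex_of_real_nonneg:
  fixes r :: real and l :: complex
  assumes "r \<ge> 0"
  shows "complex_of_real r powr l = (if r = 0 then 0 else exp (l * complex_of_real (ln r)))"
  using assms by (auto simp: powr_def Ln_of_real)

lemma norm_h_lambda:
  "ennreal (norm (h_lambda l1 l2 l3 x y z)) = abs_kernel (Re l1) (Re l2) (Re l3) (x, y, z)"
proof -
  have "norm (complex_of_real \<bar>r\<bar> powr l) = \<bar>r\<bar> powr Re l" for r :: real and l :: complex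
    by (subst norm_powr_real_powr) auto
  then show ?thesis unfolding h_lambda_def by (simp add: norm_mult ennreal_mult)
qed

lemma integrable_h_lambda_iff:
  "integrable (sphere_measure \<Otimes>\<^sub>M sphere_measure \<Otimes>\<^sub>M (sphere_measure :: (real^'n) measure))
      (\<lambda>(x, y, z). h_lambda l1 l2 l3 x y z)
    \<longleftrightarrow> sphere_integral3 (abs_kernel (Re l1) (Re l2) (Re l3) :: (real^'n) \<times> _ \<Rightarrow> _) < \<infinity>"
proof -
  have "(\<lambda>(x, y, z). h_lambda l1 l2 l3 x y z)
      \<in> borel_measurable (sphere_measure \<Otimes>\<^sub>M sphere_measure \<Otimes>\<^sub>M (sphere_measure :: (real^'n) measure))"
    by (rule measurable_sphere_measure3)
      (unfold h_lambda_def powr_complex_of_real_nonneg[OF abs_ge_zero], measurable)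
  moreover have "(\<integral>\<^sup>+p. ennreal (norm ((\<lambda>(x, y, z). h_lambda l1 l2 l3 x y z) p))
      \<partial>(sphere_measure \<Otimes>\<^sub>M sphere_measure \<Otimes>\<^sub>M (sphere_measure :: (real^'n) measure)))
    = (\<integral>\<^sup>+p. abs_kernel (Re l1) (Re l2) (Re l3) p
        \<partial>(sphere_measure \<Otimes>\<^sub>M sphere_measure \<Otimes>\<^sub>M (sphere_measure :: (real^'n) measure)))"
    by (intro nn_integral_cong) (auto simp: norm_h_lambda simp del: abs_kernel_apply split: prod.splits)
  ultimately show ?thesis
    by (simp add: integrable_iff_bounded nn_integral_sphere_measure3[OF borel_measurable_abs_kernel])
qed

theorem proposition6p7:
  fixes l1 l2 l3 :: complex
  assumes "CARD('n::finite) \<ge> 2"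
  shows "integrable (sphere_measure \<Otimes>\<^sub>M sphere_measure \<Otimes>\<^sub>M (sphere_measure :: (real ^ 'n) measure))
           (\<lambda>(x, y, z). h_lambda l1 l2 l3 x y z)
         \<longleftrightarrow> (Re l1 > -1 \<and> Re l2 > -1 \<and> Re l3 > -1)"
  unfolding integrable_h_lambda_iff sphere_integral3_abs_kernel_finite_iff[OF assms] ..

end
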